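(* Let $P_1$ and $P_2$ be finite semipure posets of the same length, and assume $P_2$ has a minimum element $\hat 0_2$. Let $\lambda_1:\mathrm{Cov}(\hat P_1)\to L_1$ be an EL-labeling of $\hat P_1$, whose adjoined minimum and maximum are denoted $\hat 0_1,\hat 1_1$, and let $\lambda_2:\mathrm{Cov}(P_2)\to L_2$ be a semi-EL-labeling of $P_2$. Let $L_2\uplus\{\hat 0_{L_2}\}$ be the poset $L_2$ with a new minimum element $\hat 0_{L_2}$ adjoined, and give $L_1\times(L_2\uplus\{\hat 0_{L_2}\})$ the componentwise (product) order. Denote the minimum of $\widehat{P_1*P_2}$ by $(\hat 0_1,\hat 0_2)$ and its maximum by $\hat 1$. Define $\lambda:\mathrm{Cov}(\widehat{P_1*P_2})\to L_1\times(L_2\uplus\{\hat 0_{L_2}\})$ as follows: for a cover $(x,k)\lessdot(y,l)$ with $(y,l)\neq\hat 1$ (where $(x,k)$ may be the minimum $(\hat 0_1,\hat 0_2)$), $$\lambda((x,k),(y,l))=\begin{cases}(\lambda_1(x,y),\lambda_2(k,l)) & \text{if } k<_{P_2} l,\\ (\lambda_1(x,y),\hat 0_{L_2}) & \text{if } k=l,\end{cases}$$ and for a cover $(x,k)\lessdot\hat 1$, $\lambda((x,k),\hat 1)=(\lambda_1(x,\hat 1_1),\hat 0_{L_2})$. Then $\lambda$ is an EL-labeling of $\widehat{P_1*P_2}$.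
   Context: All posets are finite. A poset $P$ is semipure if for every $x\in P$ all maximal chains of $P_{\le x}=\{y\in P:y\le x\}$ have the same length; this length is the rank $r_P(x)$. For semipure $P,Q$, the Rees product $P*Q$ is the set $\{(p,q)\in P\times Q: r_P(p)\ge r_Q(q)\}$ ordered by $(p_1,q_1)\le(p_2,q_2)$ iff $p_1\le_P p_2$, $q_1\le_Q q_2$ and $r_P(p_2)-r_P(p_1)\ge r_Q(q_2)-r_Q(q_1)$; equivalently $(p_2,q_2)$ covers $(p_1,q_1)$ iff $p_2$ covers $p_1$ in $P$ and either $q_2=q_1$ or $q_2$ covers $q_1$ in $Q$. For any poset $P$, $\hat P$ denotes $P$ with a new minimum $\hat 0$ and a new maximum $\hat 1$ adjoined (even if $P$ already has such elements). $\mathrm{Cov}(P)$ is the set of pairs $(x,y)$ with $y$ covering $x$. For a poset $L$, sequences over $L$ are compared lexicographically: $(a_1,\dots,a_m)\prec(b_1,\dots,b_m)$ if at the first index $i$ with $a_i\ne b_i$ we have $a_i<b_i$. An edge labeling of a bounded poset $P$ is a map $\lambda:\mathrm{Cov}(P)\to L$; the label sequence of a saturated chain $x_1<\dots<x_m$ is $(\lambda(x_1,x_2),\dots,\lambda(x_{m-1},x_m))$, and the chain is weakly increasing if $\lambda(x_i,x_{i+1})\le\lambda(x_{i+1},x_{i+2})$ for all $i$. $\lambda$ is an EL-labeling if for every $x<y$ in $P$ there is a unique weakly increasing maximal chain $C$ of $[x,y]$ and its label sequence lexicographically precedes ($\prec$) the label sequence of every other maximal chain of $[x,y]$. If $P$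 has a minimum $\hat 0$, an edge labeling of $P$ is a semi-EL-labeling if its restriction to $[\hat 0,m]$ is an EL-labeling for every maximal element $m$ of $P$. *)

theory Defs
  imports Main "HOL-Library.Product_Order" "HOL-Library.Option_ord"
begin

definition poset_on :: "'a set \<Rightarrow> ('a \<Rightarrow> 'a \<Rightarrow> bool) \<Rightarrow> bool" where
  "poset_on S le \<longleftrightarrow>
     (\<forall>x\<in>S. le x x) \<and>
     (\<forall>x\<in>S. \<forall>y\<in>S. le x y \<and> le y x \<longrightarrow> x = y) \<and>
     (\<forall>x\<in>S. \<forall>y\<in>S. \<forall>z\<in>S. le x y \<and> le y z \<longrightarrow> le x z)"

definition finite_poset :: "'a set \<Rightarrow> ('a \<Rightarrow> 'a \<Rightarrow> bool) \<Rightarrow> bool" where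
  "finite_poset S le \<longleftrightarrow> finite S \<and> poset_on S le"

definition strict :: "('a \<Rightarrow> 'a \<Rightarrow> bool) \<Rightarrow> 'a \<Rightarrow> 'a \<Rightarrow> bool" where
  "strict le x y \<longleftrightarrow> le x y \<and> x \<noteq> y"

definition covers :: "'a set \<Rightarrow> ('a \<Rightarrow> 'a \<Rightarrow> bool) \<Rightarrow> 'a \<Rightarrow> 'a \<Rightarrow> bool" where
  "covers S le x y \<longleftrightarrow> x \<in> S \<and> y \<in> S \<and> strict le x y \<and>
     \<not> (\<exists>z\<in>S. strict le x z \<and> strict le z y)"

definition down_set :: "'a set \<Rightarrow> ('a \<Rightarrow> 'a \<Rightarrow> bool) \<Rightarrow> 'a \<Rightarrow> 'a set" where
  "down_set S le x = {y \<in> S. le y x}"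

definition interval :: "'a set \<Rightarrow> ('a \<Rightarrow> 'a \<Rightarrow> bool) \<Rightarrow> 'a \<Rightarrow> 'a \<Rightarrow> 'a set" where
  "interval S le x y = {z \<in> S. le x z \<and> le z y}"

definition is_chain :: "'a set \<Rightarrow> ('a \<Rightarrow> 'a \<Rightarrow> bool) \<Rightarrow> 'a set \<Rightarrow> bool" where
  "is_chain S le C \<longleftrightarrow> C \<subseteq> S \<and> (\<forall>a\<in>C. \<forall>b\<in>C. le a b \<or> le b a)"

definition is_maxchain :: "'a set \<Rightarrow> ('a \<Rightarrow> 'a \<Rightarrow> bool) \<Rightarrow> 'a set \<Rightarrow> bool" where
  "is_maxchain S le C \<longleftrightarrow> is_chain S le C \<and> \<not> (\<exists>D. is_chain S le D \<and> C \<subset> D)"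

definition semipure :: "'a set \<Rightarrow> ('a \<Rightarrow> 'a \<Rightarrow> bool) \<Rightarrow> bool" where
  "semipure S le \<longleftrightarrow>
     (\<forall>x\<in>S. \<forall>C D. is_maxchain (down_set S le x) le C \<and> is_maxchain (down_set S le x) le D
        \<longrightarrow> card C = card D)"

definition rank :: "'a set \<Rightarrow> ('a \<Rightarrow> 'a \<Rightarrow> bool) \<Rightarrow> 'a \<Rightarrow> nat" where
  "rank S le x = (THE n. \<exists>C. is_maxchain (down_set S le x) le C \<and> card C = Suc n)"

(* length of a poset: maximal length of a chain (-1 for the empty poset) *)
definition poset_length :: "'a set \<Rightarrow> ('a \<Rightarrow> 'a \<Rightarrow> bool) \<Rightarrow> int" where
  "poset_length S le = int (Max {card C | C. is_chain S le C}) - 1"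

definition rees_carrier ::
  "'a set \<Rightarrow> ('a \<Rightarrow> 'a \<Rightarrow> bool) \<Rightarrow> 'b set \<Rightarrow> ('b \<Rightarrow> 'b \<Rightarrow> bool) \<Rightarrow> ('a \<times> 'b) set" where
  "rees_carrier S1 le1 S2 le2 = {(p, q). p \<in> S1 \<and> q \<in> S2 \<and> rank S1 le1 p \<ge> rank S2 le2 q}"

definition rees_le ::
  "'a set \<Rightarrow> ('a \<Rightarrow> 'a \<Rightarrow> bool) \<Rightarrow> 'b set \<Rightarrow> ('b \<Rightarrow> 'b \<Rightarrow> bool) \<Rightarrow> 'a \<times> 'b \<Rightarrow> 'a \<times> 'b \<Rightarrow> bool" where
  "rees_le S1 le1 S2 le2 u v \<longleftrightarrow>
     le1 (fst u) (fst v) \<and> le2 (snd u) (snd v) \<and>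
     int (rank S1 le1 (fst v)) - int (rank S1 le1 (fst u))
       \<ge> int (rank S2 le2 (snd v)) - int (rank S2 le2 (snd u))"

datatype 'a hat = HBot | Mid 'a | HTop

definition hat_carrier :: "'a set \<Rightarrow> 'a hat set" where
  "hat_carrier S = {HBot, HTop} \<union> Mid ` S"

fun hat_le :: "('a \<Rightarrow> 'a \<Rightarrow> bool) \<Rightarrow> 'a hat \<Rightarrow> 'a hat \<Rightarrow> bool" where
  "hat_le le HBot _ = True"
| "hat_le le (Mid x) (Mid y) = le x y"
| "hat_le le _ HTop = True"
| "hat_le le _ _ = False"

definition maxchain_list :: "'a set \<Rightarrow> ('a \<Rightarrow> 'a \<Rightarrow> bool) \<Rightarrow> 'a \<Rightarrow> 'a \<Rightarrow> 'a list \<Rightarrow> bool" where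
  "maxchain_list S le x y xs \<longleftrightarrow>
     sorted_wrt (strict le) xs \<and> is_maxchain (interval S le x y) le (set xs)"

definition label_seq :: "('a \<Rightarrow> 'a \<Rightarrow> 'l) \<Rightarrow> 'a list \<Rightarrow> 'l list" where
  "label_seq lam xs = map (\<lambda>(a, b). lam a b) (zip xs (tl xs))"

definition weakly_increasing :: "('a \<Rightarrow> 'a \<Rightarrow> 'l::order) \<Rightarrow> 'a list \<Rightarrow> bool" where
  "weakly_increasing lam xs \<longleftrightarrow>
     (\<forall>i. Suc (Suc i) < length xs \<longrightarrow>
        lam (xs ! i) (xs ! Suc i) \<le> lam (xs ! Suc i) (xs ! Suc (Suc i)))"

definition lex_prec :: "'l::order list \<Rightarrow> 'l list \<Rightarrow> bool" where
  "lex_prec as bs \<longleftrightarrow>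
     (\<exists>i. i < length as \<and> i < length bs \<and> take i as = take i bs \<and> as ! i < bs ! i)"

definition EL_labeling :: "'a set \<Rightarrow> ('a \<Rightarrow> 'a \<Rightarrow> bool) \<Rightarrow> ('a \<Rightarrow> 'a \<Rightarrow> 'l::order) \<Rightarrow> bool" where
  "EL_labeling S le lam \<longleftrightarrow>
     (\<forall>x\<in>S. \<forall>y\<in>S. strict le x y \<longrightarrow>
        (\<exists>!xs. maxchain_list S le x y xs \<and> weakly_increasing lam xs) \<and>
        (\<forall>xs ys. maxchain_list S le x y xs \<and> weakly_increasing lam xs \<and>
                 maxchain_list S le x y ys \<and> ys \<noteq> xs
                 \<longrightarrow> lex_prec (label_seq lam xs) (label_seq lam ys)))"

definition is_minimum :: "'a set \<Rightarrow> ('a \<Rightarrow> 'a \<Rightarrow> bool) \<Rightarrow> 'a \<Rightarrow> bool" where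
  "is_minimum S le z \<longleftrightarrow> z \<in> S \<and> (\<forall>y\<in>S. le z y)"

definition is_maximal :: "'a set \<Rightarrow> ('a \<Rightarrow> 'a \<Rightarrow> bool) \<Rightarrow> 'a \<Rightarrow> bool" where
  "is_maximal S le m \<longleftrightarrow> m \<in> S \<and> \<not> (\<exists>y\<in>S. strict le m y)"

definition semi_EL_labeling ::
  "'a set \<Rightarrow> ('a \<Rightarrow> 'a \<Rightarrow> bool) \<Rightarrow> 'a \<Rightarrow> ('a \<Rightarrow> 'a \<Rightarrow> 'l::order) \<Rightarrow> bool" where
  "semi_EL_labeling S le z lam \<longleftrightarrow>
     (\<forall>m. is_maximal S le m \<longrightarrow> EL_labeling (interval S le z m) le lam)"

(* The labeling lambda of the hatted Rees product; labels in L1 x (L2 + new minimum None),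
   with the componentwise order.  z2 is the minimum of P2. *)
fun rees_label ::
  "('a hat \<Rightarrow> 'a hat \<Rightarrow> 'l1) \<Rightarrow> ('b \<Rightarrow> 'b \<Rightarrow> 'l2) \<Rightarrow> 'b \<Rightarrow>
   ('a \<times> 'b) hat \<Rightarrow> ('a \<times> 'b) hat \<Rightarrow> 'l1 \<times> 'l2 option" where
  "rees_label l1 l2 z HBot HTop = (l1 HBot HTop, None)"
| "rees_label l1 l2 z (Mid (x, k)) HTop = (l1 (Mid x) HTop, None)"
| "rees_label l1 l2 z HBot (Mid (y, l)) =
     (l1 HBot (Mid y), if z = l then None else Some (l2 z l))"
| "rees_label l1 l2 z (Mid (x, k)) (Mid (y, l)) =
     (l1 (Mid x) (Mid y), if k = l then None else Some (l2 k l))"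
| "rees_label l1 l2 z _ _ = undefined"

end

theory Submission
  imports Defs
begin

(*
  A maximal chain of an interval [u, v] of the hatted Rees product projects, in the first
  coordinate, to a maximal chain of the corresponding interval of hat P1 and, in the second
  coordinate, to a walk in P2 that at each step either stays or moves up by a cover. Ranks in the
  semipure posets determine how many of the steps are stays. The label of a step pairs the two
  projected labels, a stay getting the new least label None. Hence a weakly increasing chain must
  make all its stays first and then climb along a weakly increasing maximal chain of P2, while its
  first coordinate is weakly increasing in hat P1: by the EL-property of the factors there is
  exactly one such chain, and comparing the zipped label sequences componentwise shows that it is
  lexicographically first. When v is the top, the final step carries None, so the second
  coordinate cannot move at all.
*)

lemma poset_on_reflD: "poset_on S le \<Longrightarrow> x \<in> S \<Longrightarrow> le x x"
  unfolding poset_on_def by blast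

lemma poset_on_antisymD:
  "poset_on S le \<Longrightarrow> x \<in> S \<Longrightarrow> y \<in> S \<Longrightarrow> le x y \<Longrightarrow> le y x \<Longrightarrow> x = y"
  unfolding poset_on_def by blast

lemma poset_on_transD:
  "poset_on S le \<Longrightarrow> x \<in> S \<Longrightarrow> y \<in> S \<Longrightarrow> z \<in> S \<Longrightarrow> le x y \<Longrightarrow> le y z \<Longrightarrow> le x z"
  unfolding poset_on_def by blast

lemma poset_on_subset: "poset_on S le \<Longrightarrow> T \<subseteq> S \<Longrightarrow> poset_on T le"
  unfolding poset_on_def by blast

lemma strict_trans:
  assumes "poset_on S le" "x \<in> S" "y \<in> S" "z \<in> S" "strict le x y" "strict le y z"
  shows "strict le x z"
  using assms unfolding strict_def by (metis poset_on_antisymD poset_on_transD)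

lemma is_maxchain_insert:
  assumes C: "is_maxchain T le C" and zT: "z \<in> T"
    and comp: "\<And>c. c \<in> C \<Longrightarrow> le c z \<or> le z c" and refl: "le z z"
  shows "z \<in> C"
proof (rule ccontr)
  assume "z \<notin> C"
  have "is_chain T le (insert z C)"
    using C zT comp refl unfolding is_maxchain_def is_chain_def by blast
  moreover have "C \<subset> insert z C" using \<open>z \<notin> C\<close> by blast
  ultimately show False using C unfolding is_maxchain_def by blast
qed

section \<open>Saturated chains\<close>

definition sat_chain :: "'a set \<Rightarrow> ('a \<Rightarrow> 'a \<Rightarrow> bool) \<Rightarrow> 'a list \<Rightarrow> bool" where
  "sat_chain S le xs \<longleftrightarrow> xs \<noteq> [] \<and> set xs \<subseteq> S \<and>
     (\<forall>i. Suc i < length xs \<longrightarrow> covers S le (xs!i) (xs!Suc i))"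

definition sat_chain_between ::
  "'a set \<Rightarrow> ('a \<Rightarrow> 'a \<Rightarrow> bool) \<Rightarrow> 'a \<Rightarrow> 'a \<Rightarrow> 'a list \<Rightarrow> bool" where
  "sat_chain_between S le x y xs \<longleftrightarrow> sat_chain S le xs \<and> hd xs = x \<and> last xs = y"

lemma sat_chain_nth_in: "sat_chain S le xs \<Longrightarrow> i < length xs \<Longrightarrow> xs!i \<in> S"
  unfolding sat_chain_def by (meson nth_mem subsetD)

lemma sat_chain_coversD:
  "sat_chain S le xs \<Longrightarrow> Suc i < length xs \<Longrightarrow> covers S le (xs!i) (xs!Suc i)"
  unfolding sat_chain_def by blast

lemma sat_chain_strict_nth:
  assumes P: "poset_on S le" and c: "sat_chain S le xs"
  shows "i < j \<Longrightarrow> j < length xs \<Longrightarrow> strict le (xs!i) (xs!j)"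
proof (induction j)
  case 0
  then show ?case by simp
next
  case (Suc j)
  have cov: "covers S le (xs!j) (xs!Suc j)" using sat_chain_coversD[OF c] Suc.prems by simp
  show ?case
  proof (cases "i = j")
    case True
    then show ?thesis using cov by (simp add: covers_def)
  next
    case False
    then have "strict le (xs!i) (xs!j)" using Suc by simp
    moreover have "xs!i \<in> S" "xs!j \<in> S" "xs!Suc j \<in> S"
      using sat_chain_nth_in[OF c] Suc.prems by auto
    ultimately show ?thesis using strict_trans[OF P] cov by (meson covers_def)
  qed
qed

lemma sat_chain_le_nth:
  assumes P: "poset_on S le" and c: "sat_chain S le xs" and "i \<le> j" "j < length xs"
  shows "le (xs!i) (xs!j)"
  using assms sat_chain_strict_nth[OF P c, of i j] poset_on_reflD[OF P] sat_chain_nth_in[OF c]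
  by (cases "i = j") (auto simp: strict_def)

lemma sat_chain_sorted:
  "poset_on S le \<Longrightarrow> sat_chain S le xs \<Longrightarrow> sorted_wrt (strict le) xs"
  by (simp add: sorted_wrt_iff_nth_less sat_chain_strict_nth)

lemma sat_chain_distinct_Suc:
  "sat_chain S le xs \<Longrightarrow> Suc i < length xs \<Longrightarrow> xs!i \<noteq> xs!Suc i"
  unfolding sat_chain_def covers_def strict_def by blast

lemma sat_chain_single: "x \<in> S \<Longrightarrow> sat_chain S le [x]"
  by (simp add: sat_chain_def)

lemma sat_chain_Cons:
  assumes "sat_chain S le xs" "covers S le x (hd xs)"
  shows "sat_chain S le (x # xs)"
  using assms unfolding sat_chain_def
  by (auto simp: covers_def hd_conv_nth nth_Cons split: nat.split)

lemma sat_chain_betweenI: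
  "sat_chain S le xs \<Longrightarrow> xs!0 = x \<Longrightarrow> xs!(length xs - 1) = y \<Longrightarrow> sat_chain_between S le x y xs"
  unfolding sat_chain_between_def sat_chain_def by (simp add: hd_conv_nth last_conv_nth)

lemma sat_chain_between_ends:
  assumes "sat_chain_between S le x y xs"
  shows "xs \<noteq> []" "xs!0 = x" "xs!(length xs - 1) = y"
  using assms unfolding sat_chain_between_def sat_chain_def
  by (auto simp: hd_conv_nth last_conv_nth)

lemma sat_chain_between_nontrivial:
  "sat_chain_between S le x y xs \<Longrightarrow> x \<noteq> y \<Longrightarrow> Suc 0 < length xs"
  using sat_chain_between_ends[of S le x y xs] by (cases xs) auto

lemma sat_chain_between_bounds:
  assumes P: "poset_on S le" and c: "sat_chain_between S le x y xs" and i: "i < length xs"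
  shows "le x (xs!i)" "le (xs!i) y"
  using sat_chain_le_nth[OF P, of xs 0 i] sat_chain_le_nth[OF P, of xs i "length xs - 1"]
    sat_chain_between_ends[OF c] c i
  by (auto simp: sat_chain_between_def)

lemma sorted_strict_le_nth:
  assumes "sorted_wrt (strict le) xs" "\<And>i. i < length xs \<Longrightarrow> le (xs!i) (xs!i)"
    and "i \<le> j" "j < length xs"
  shows "le (xs!i) (xs!j)"
  using assms sorted_wrt_nth_less[OF assms(1), of i j] by (cases "i = j") (auto simp: strict_def)

lemma maxchain_list_imp_sat_chain_between:
  assumes P: "poset_on S le" and xy: "le x y" "x \<in> S" "y \<in> S"
    and m: "maxchain_list S le x y xs"
  shows "sat_chain_between S le x y xs"
proof -
  let ?I = "interval S le x y"
  have sw: "sorted_wrt (strict le) xs" and mc: "is_maxchain ?I le (set xs)"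
    using m unfolding maxchain_list_def by auto
  have "set xs \<subseteq> ?I" using mc unfolding is_maxchain_def is_chain_def by blast
  then have inS: "xs!i \<in> S" and lo: "le x (xs!i)" and hi: "le (xs!i) y" if "i < length xs" for i
    using that nth_mem unfolding interval_def by blast+
  have le_nth: "le (xs!i) (xs!j)" if "i \<le> j" "j < length xs" for i j
    by (rule sorted_strict_le_nth[OF sw _ that]) (use inS poset_on_reflD[OF P] in blast)
  have in_chain: "z \<in> set xs"
    if "z \<in> ?I" and comp: "\<And>i. i < length xs \<Longrightarrow> le (xs!i) z \<or> le z (xs!i)" for z
  proof (rule is_maxchain_insert[OF mc \<open>z \<in> ?I\<close>])
    show "le z z" using that poset_on_reflD[OF P] by (simp add: interval_def)
    show "le c z \<or> le z c" if "c \<in> set xs" for c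
      using that comp by (auto simp: in_set_conv_nth)
  qed
  have "x \<in> ?I" "y \<in> ?I" using xy poset_on_reflD[OF P] by (auto simp: interval_def)
  then have "x \<in> set xs" "y \<in> set xs" using in_chain lo hi by blast+
  then obtain jx jy where j: "jx < length xs" "xs!jx = x" "jy < length xs" "xs!jy = y"
    by (auto simp: in_set_conv_nth)
  have ne: "xs \<noteq> []" using j by auto
  have "xs!0 = x"
    using ne poset_on_antisymD[OF P inS[of 0] xy(2)] le_nth[of 0 jx] lo[of 0] j by auto
  moreover have "xs!(length xs - 1) = y"
    using poset_on_antisymD[OF P inS[of "length xs - 1"] xy(3)] le_nth[of jy "length xs - 1"]
      hi[of "length xs - 1"] j ne
    by auto
  moreover have "covers S le (xs!i) (xs!Suc i)" if i: "Suc i < length xs" for i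
    unfolding covers_def
  proof (intro conjI notI)
    show "xs!i \<in> S" "xs!Suc i \<in> S" "strict le (xs!i) (xs!Suc i)"
      using inS sorted_wrt_nth_less[OF sw] i by auto
    assume "\<exists>z\<in>S. strict le (xs!i) z \<and> strict le z (xs!Suc i)"
    then obtain z where z: "z \<in> S" "strict le (xs!i) z" "strict le z (xs!Suc i)" by blast
    have below: "le (xs!j) z" if "j \<le> i" for j
      using poset_on_transD[OF P inS inS z(1) le_nth[OF that] _] that i z(2)
      by (simp add: strict_def)
    have above: "le z (xs!j)" if "Suc i \<le> j" "j < length xs" for j
      using poset_on_transD[OF P z(1) inS inS _ le_nth[OF that]] that z(3)
      by (simp add: strict_def)
    have "z \<in> ?I"
      using poset_on_transD[OF P xy(2) inS z(1) lo below[of i]]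
        poset_on_transD[OF P z(1) inS xy(3) above[of "Suc i"] hi] i z(1)
      by (simp add: interval_def)
    moreover have "le (xs!j) z \<or> le z (xs!j)" if "j < length xs" for j
      using below above that by (cases "j \<le> i") auto
    ultimately obtain j where j: "j < length xs" "xs!j = z"
      using in_chain by (auto simp: in_set_conv_nth)
    show False
    proof (cases "j \<le> i")
      case True
      then have "le z (xs!i)" using le_nth[of j i] j i by simp
      then show False using z poset_on_antisymD[OF P z(1) inS[of i]] i by (auto simp: strict_def)
    next
      case False
      then have "le (xs!Suc i) z" using le_nth[of "Suc i" j] j by simp
      then show False using z poset_on_antisymD[OF P z(1) inS[of "Suc i"]] i by (auto simp: strict_def)
    qed
  qed
  ultimately show ?thesis
    using j inS by (intro sat_chain_betweenI) (auto simp: sat_chain_def set_conv_nth)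
qed

lemma sat_chain_between_imp_maxchain_list:
  assumes P: "poset_on S le" and c: "sat_chain_between S le x y xs"
  shows "maxchain_list S le x y xs"
proof -
  let ?I = "interval S le x y"
  have ch: "sat_chain S le xs" using c by (simp add: sat_chain_between_def)
  note ends = sat_chain_between_ends[OF c]
  have inS: "xs!i \<in> S" if "i < length xs" for i
    using sat_chain_nth_in[OF ch that] .
  have le_nth: "le (xs!i) (xs!j)" if "i \<le> j" "j < length xs" for i j
    using sat_chain_le_nth[OF P ch that] .
  have sub: "set xs \<subseteq> ?I"
    using sat_chain_between_bounds[OF P c] inS by (auto simp: interval_def in_set_conv_nth)
  have "is_chain ?I le (set xs)"
    unfolding is_chain_def
  proof (intro conjI sub ballI)
    fix a b assume "a \<in> set xs" "b \<in> set xs"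
    then obtain i j where "i < length xs" "j < length xs" "a = xs!i" "b = xs!j"
      by (auto simp: in_set_conv_nth)
    then show "le a b \<or> le b a" using le_nth nat_le_linear by metis
  qed
  moreover have "\<not> (\<exists>D. is_chain ?I le D \<and> set xs \<subset> D)"
  proof
    assume "\<exists>D. is_chain ?I le D \<and> set xs \<subset> D"
    then obtain D w where D: "is_chain ?I le D" "set xs \<subseteq> D" "w \<in> D" "w \<notin> set xs" by blast
    have wI: "w \<in> S" "le x w" "le w y" using D unfolding is_chain_def interval_def by auto
    have comp: "le (xs!j) w \<or> le w (xs!j)" if "j < length xs" for j
      using D that unfolding is_chain_def by (meson nth_mem subsetD)
    have wne: "xs!j \<noteq> w" if "j < length xs" for j
      using D(4) that by auto
    define J where "J = {j. j < length xs \<and> le (xs!j) w}"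
    define j where "j = Max J"
    have "finite J" "0 \<in> J" unfolding J_def using wI ends by auto
    then have "j \<in> J" and jmax: "\<And>t. t \<in> J \<Longrightarrow> t \<le> j"
      unfolding j_def by (auto intro: Max_in)
    then have jl: "j < length xs" and ljw: "le (xs!j) w" by (auto simp: J_def)
    have Sj: "Suc j < length xs"
    proof (rule ccontr)
      assume "\<not> Suc j < length xs"
      then have "j = length xs - 1" using jl by simp
      then have "xs!j = y" using ends by simp
      then show False
        using poset_on_antisymD[OF P wI(1) inS[OF jl]] ljw wI wne[OF jl] by simp
    qed
    then have "le w (xs!Suc j)" using comp[OF Sj] jmax[of "Suc j"] by (force simp: J_def)
    moreover have "strict le (xs!j) w" "w \<noteq> xs!Suc j"
      using ljw wne jl Sj by (auto simp: strict_def)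
    ultimately show False
      using sat_chain_coversD[OF ch Sj] wI(1) unfolding covers_def strict_def by blast
  qed
  ultimately show ?thesis
    unfolding maxchain_list_def is_maxchain_def using sat_chain_sorted[OF P ch] by blast
qed

lemma maxchain_list_iff_sat_chain_between:
  assumes "poset_on S le" "x \<in> S" "y \<in> S" "le x y"
  shows "maxchain_list S le x y xs \<longleftrightarrow> sat_chain_between S le x y xs"
  using assms maxchain_list_imp_sat_chain_between sat_chain_between_imp_maxchain_list by metis

lemma label_seq_Cons_Cons [simp]: "label_seq f (a # b # xs) = f a b # label_seq f (b # xs)"
  by (simp add: label_seq_def)

lemma length_label_seq [simp]: "length (label_seq f xs) = length xs - 1"
  by (simp add: label_seq_def)

lemma label_seq_nth: "Suc i < length xs \<Longrightarrow> label_seq f xs ! i = f (xs!i) (xs!Suc i)"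
  by (simp add: label_seq_def nth_tl)

lemma label_seq_replicate_append:
  assumes "K \<noteq> []" "hd K = k"
  shows "label_seq f (replicate j k @ K) = replicate j (f k k) @ label_seq f K"
proof (induction j)
  case 0
  then show ?case by simp
next
  case (Suc j)
  moreover have "replicate j k @ K = k # tl (replicate j k @ K)"
    using assms by (cases j) (auto intro: list.collapse[symmetric])
  ultimately show ?case by (metis label_seq_Cons_Cons replicate_Suc append_Cons)
qed

lemma weakly_increasing_iff_sorted:
  "weakly_increasing lam xs \<longleftrightarrow> sorted_wrt (\<le>) (label_seq lam xs)"
  by (auto simp: weakly_increasing_def sorted_wrt_iff_nth_Suc_transp label_seq_nth)

lemma sorted_wrt_zip_iff:
  "length xs = length ys \<Longrightarrow>
   sorted_wrt (\<le>) (zip (xs :: 'a::order list) (ys :: 'b::order list)) \<longleftrightarrow>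
   sorted_wrt (\<le>) xs \<and> sorted_wrt (\<le>) ys"
  by (simp add: sorted_wrt_iff_nth_Suc_transp[OF transp_on_le]) auto

lemma sorted_wrt_replicate_None_append:
  "sorted_wrt (\<le>) (replicate j None @ map Some xs) \<longleftrightarrow> sorted_wrt (\<le>) (xs :: 'a::order list)"
  by (simp add: sorted_wrt_append sorted_wrt_map sorted_wrt_iff_nth_Suc_transp[OF transp_on_le])

text \<open>Agreement on common indices, i.e. one list is a prefix of the other; needed because maximal
  chains of a semipure poset may have different lengths.\<close>

definition nth_agree :: "'a list \<Rightarrow> 'a list \<Rightarrow> bool" where
  "nth_agree xs ys \<longleftrightarrow> (\<forall>j. j < length xs \<longrightarrow> j < length ys \<longrightarrow> xs!j = ys!j)"

lemma nth_agree_refl [simp]: "nth_agree xs xs"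
  by (simp add: nth_agree_def)

lemma nth_agree_take: "nth_agree xs ys \<Longrightarrow> i \<le> length xs \<Longrightarrow> i \<le> length ys \<Longrightarrow> take i xs = take i ys"
  unfolding nth_agree_def by (intro nth_equalityI) auto

lemma lex_precI:
  assumes "j < length xs" "j < length ys" "\<And>i. i < j \<Longrightarrow> xs!i = ys!i" "xs!j < ys!j"
  shows "lex_prec xs ys"
  unfolding lex_prec_def using assms by (intro exI[of _ j]) (auto intro: nth_equalityI)

lemma lex_prec_append: "lex_prec xs ys \<Longrightarrow> lex_prec (zs @ xs) (zs @ ys)"
  unfolding lex_prec_def
proof (elim exE conjE)
  fix i assume "i < length xs" "i < length ys" "take i xs = take i ys" "xs!i < ys!i"
  then show "\<exists>i. i < length (zs @ xs) \<and> i < length (zs @ ys) \<and>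
      take i (zs @ xs) = take i (zs @ ys) \<and> (zs @ xs)!i < (zs @ ys)!i"
    by (intro exI[of _ "length zs + i"]) (simp add: nth_append)
qed

lemma lex_prec_map_Some: "lex_prec xs ys \<Longrightarrow> lex_prec (map Some xs) (map Some ys)"
  unfolding lex_prec_def by (auto simp: take_map)

lemma lex_prec_replicate_None_append:
  assumes "i < j" "i < length ys" "ys!i \<noteq> None"
  shows "lex_prec (replicate j None @ zs) ys"
proof -
  define i0 where "i0 = (LEAST i. i < length ys \<and> ys!i \<noteq> None)"
  have i0: "i0 < length ys" "ys!i0 \<noteq> None" "i0 \<le> i"
    using LeastI[of "\<lambda>i. i < length ys \<and> ys!i \<noteq> None" i] Least_le[of _ i] assms
    unfolding i0_def by auto
  have "ys!t = None" if "t < i0" for t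
    using not_less_Least[of t "\<lambda>i. i < length ys \<and> ys!i \<noteq> None"] that i0 unfolding i0_def by auto
  then show ?thesis
    using i0 assms by (intro lex_precI[of i0]) (auto simp: nth_append)
qed

lemma less_prod_fstI: "fst (a::'a::order \<times> 'b::order) < fst c \<Longrightarrow> snd a \<le> snd c \<Longrightarrow> a < c"
  unfolding less_prod_def less_eq_prod_def by (metis order.strict_iff_not)

lemma less_prod_sndI: "fst (a::'a::order \<times> 'b::order) \<le> fst c \<Longrightarrow> snd a < snd c \<Longrightarrow> a < c"
  unfolding less_prod_def less_eq_prod_def by (metis order.strict_iff_not)

lemma lex_prec_zip:
  fixes A A' :: "'a::order list" and B B' :: "'b::order list"
  assumes len: "length A = length B" "length A' = length B'"
    and a: "nth_agree A A' \<or> lex_prec A A'" and b: "nth_agree B B' \<or> lex_prec B B'"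
    and s: "lex_prec A A' \<or> lex_prec B B'"
  shows "lex_prec (zip A B) (zip A' B')"
proof -
  have agree_upto: "take i X = take i Y" "\<And>t. t < i \<Longrightarrow> X!t = Y!t"
    if "take j X = take j Y" "i \<le> j" for X Y :: "'c list" and i j
    using that by (metis min.absorb1 take_take, metis less_le_trans nth_take)
  have first_diff: "\<exists>i. i < length X \<and> i < length Y \<and> take i X = take i Y \<and> X!i < Y!i"
    if "lex_prec X Y" for X Y :: "'c::order list"
    using that unfolding lex_prec_def .
  show ?thesis
  proof (cases "lex_prec A A'")
    case True
    then obtain i1 where i1: "i1 < length A" "i1 < length A'" "take i1 A = take i1 A'" "A!i1 < A'!i1"
      by (blast dest: first_diff)
    show ?thesis
    proof (cases "lex_prec B B'")
      case False
      then have "nth_agree B B'" using b by simp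
      then have "take i1 B = take i1 B'" "B!i1 = B'!i1"
        using nth_agree_take[of B B' i1] i1 len unfolding nth_agree_def by simp_all
      then show ?thesis unfolding lex_prec_def
        using i1 len by (intro exI[of _ i1]) (auto simp: take_zip intro!: less_prod_fstI)
    next
      case True
      then obtain i2 where i2: "i2 < length B" "i2 < length B'" "take i2 B = take i2 B'" "B!i2 < B'!i2"
        by (blast dest: first_diff)
      define i where "i = min i1 i2"
      have ti: "take i A = take i A'" "take i B = take i B'"
        using agree_upto(1)[OF i1(3)] agree_upto(1)[OF i2(3)] by (simp_all add: i_def)
      have "(A!i, B!i) < (A'!i, B'!i)"
      proof (cases "i1 \<le> i2")
        case True
        then have "B!i1 \<le> B'!i1" using i2 agree_upto(2)[OF i2(3) order.refl, of i1]
          by (cases "i1 = i2") (auto simp: less_imp_le)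
        then show ?thesis using i1 True by (intro less_prod_fstI) (auto simp: i_def)
      next
        case False
        then have "A!i2 = A'!i2" using agree_upto(2)[OF i1(3) order.refl, of i2] by simp
        then show ?thesis using i2 False by (intro less_prod_sndI) (auto simp: i_def)
      qed
      then show ?thesis unfolding lex_prec_def
        using ti i1 i2 len by (intro exI[of _ i]) (auto simp: take_zip i_def)
    qed
  next
    case False
    then have "nth_agree A A'" using a by simp
    obtain i2 where i2: "i2 < length B" "i2 < length B'" "take i2 B = take i2 B'" "B!i2 < B'!i2"
      using s False by (blast dest: first_diff)
    have "take i2 A = take i2 A'" "A!i2 = A'!i2"
      using nth_agree_take[OF \<open>nth_agree A A'\<close>, of i2] \<open>nth_agree A A'\<close> i2 len
      unfolding nth_agree_def by simp_all
    then show ?thesis unfolding lex_prec_def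
      using i2 len by (intro exI[of _ i2]) (auto simp: take_zip intro!: less_prod_sndI)
  qed
qed

definition EL_interval ::
  "'a set \<Rightarrow> ('a \<Rightarrow> 'a \<Rightarrow> bool) \<Rightarrow> ('a \<Rightarrow> 'a \<Rightarrow> 'l::order) \<Rightarrow> 'a \<Rightarrow> 'a \<Rightarrow> bool" where
  "EL_interval S le lam x y \<longleftrightarrow>
     (\<exists>!xs. sat_chain_between S le x y xs \<and> weakly_increasing lam xs) \<and>
     (\<forall>xs ys. sat_chain_between S le x y xs \<and> weakly_increasing lam xs \<and>
        sat_chain_between S le x y ys \<and> ys \<noteq> xs \<longrightarrow> lex_prec (label_seq lam xs) (label_seq lam ys))"

lemma EL_labeling_iff_EL_interval:
  assumes "poset_on S le"
  shows "EL_labeling S le lam \<longleftrightarrow>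
    (\<forall>x\<in>S. \<forall>y\<in>S. strict le x y \<longrightarrow> EL_interval S le lam x y)"
  unfolding EL_labeling_def EL_interval_def strict_def
  by (intro ball_cong refl) (simp add: maxchain_list_iff_sat_chain_between[OF assms] cong: imp_cong)

lemma EL_intervalI:
  assumes "sat_chain_between S le x y C" "weakly_increasing lam C"
    and "\<And>D. sat_chain_between S le x y D \<Longrightarrow> weakly_increasing lam D \<Longrightarrow> D = C"
    and "\<And>D. sat_chain_between S le x y D \<Longrightarrow> D \<noteq> C \<Longrightarrow> lex_prec (label_seq lam C) (label_seq lam D)"
  shows "EL_interval S le lam x y"
  unfolding EL_interval_def using assms by metis

lemma EL_intervalE:
  assumes "EL_interval S le lam x y"
  obtains C where "sat_chain_between S le x y C" "weakly_increasing lam C"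
    and "\<And>D. sat_chain_between S le x y D \<Longrightarrow> weakly_increasing lam D \<Longrightarrow> D = C"
    and "\<And>D. sat_chain_between S le x y D \<Longrightarrow> D \<noteq> C \<Longrightarrow> lex_prec (label_seq lam C) (label_seq lam D)"
  using assms unfolding EL_interval_def by metis

lemma sat_chain_between_refl_iff:
  assumes "poset_on S le"
  shows "sat_chain_between S le x x xs \<longleftrightarrow> x \<in> S \<and> xs = [x]"
proof
  assume c: "sat_chain_between S le x x xs"
  then have "\<not> Suc 0 < length xs"
    using sat_chain_strict_nth[OF assms, of xs 0 "length xs - 1"] sat_chain_between_ends[OF c]
    by (auto simp: sat_chain_between_def strict_def)
  then show "x \<in> S \<and> xs = [x]"
    using sat_chain_between_ends[OF c] c sat_chain_nth_in[of S le xs 0]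
    by (cases xs) (auto simp: sat_chain_between_def)
qed (simp add: sat_chain_between_def sat_chain_single)

lemma EL_interval_refl: "poset_on S le \<Longrightarrow> x \<in> S \<Longrightarrow> EL_interval S le lam x x"
  by (rule EL_intervalI[of _ _ _ _ "[x]"])
    (auto simp: sat_chain_between_refl_iff weakly_increasing_def)

definition convex_in :: "'a set \<Rightarrow> ('a \<Rightarrow> 'a \<Rightarrow> bool) \<Rightarrow> 'a set \<Rightarrow> bool" where
  "convex_in S le T \<longleftrightarrow> T \<subseteq> S \<and> (\<forall>a\<in>T. \<forall>b\<in>T. \<forall>c\<in>S. le a c \<and> le c b \<longrightarrow> c \<in> T)"

lemma covers_convex_iff:
  assumes "convex_in S le T" "a \<in> T" "b \<in> T"
  shows "covers T le a b \<longleftrightarrow> covers S le a b"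
  using assms unfolding convex_in_def covers_def strict_def by blast

lemma sat_chain_convex_iff:
  assumes T: "convex_in S le T" and sub: "set xs \<subseteq> T"
  shows "sat_chain T le xs \<longleftrightarrow> sat_chain S le xs"
proof -
  have "covers T le (xs!i) (xs!Suc i) \<longleftrightarrow> covers S le (xs!i) (xs!Suc i)" if "Suc i < length xs" for i
    using covers_convex_iff[OF T] sub that by (simp add: subset_iff)
  moreover have "set xs \<subseteq> S" using sub T by (auto simp: convex_in_def)
  ultimately show ?thesis using sub unfolding sat_chain_def by blast
qed

lemma sat_chain_between_convex_iff:
  assumes P: "poset_on S le" and T: "convex_in S le T" and xT: "x \<in> T" and yT: "y \<in> T"
  shows "sat_chain_between T le x y xs \<longleftrightarrow> sat_chain_between S le x y xs"
proof -
  have "set xs \<subseteq> T" if c: "sat_chain_between S le x y xs"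
  proof
    fix a assume "a \<in> set xs"
    then obtain i where i: "i < length xs" "a = xs!i" by (auto simp: in_set_conv_nth)
    have "le x a" "le a y" "a \<in> S"
      using sat_chain_between_bounds[OF P c i(1)] c sat_chain_nth_in[OF _ i(1)] i(2)
      by (auto simp: sat_chain_between_def)
    then show "a \<in> T" using T xT yT unfolding convex_in_def by blast
  qed
  moreover have "set xs \<subseteq> T" if "sat_chain_between T le x y xs"
    using that by (simp add: sat_chain_between_def sat_chain_def)
  ultimately show ?thesis
    unfolding sat_chain_between_def using sat_chain_convex_iff[OF T] by blast
qed

lemma EL_interval_convex_iff:
  assumes "poset_on S le" "convex_in S le T" "x \<in> T" "y \<in> T"
  shows "EL_interval T le lam x y \<longleftrightarrow> EL_interval S le lam x y"
  unfolding EL_interval_def using sat_chain_between_convex_iff[OF assms] by simp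

lemma exists_maxchain:
  assumes "finite T" shows "\<exists>C. is_maxchain T le C"
proof -
  let ?Ch = "{C. is_chain T le C}"
  have finC: "finite ?Ch" using assms by (auto simp: is_chain_def intro: finite_subset[of _ "Pow T"])
  have "{} \<in> ?Ch" by (simp add: is_chain_def)
  then obtain C where C: "C \<in> ?Ch" "card C = Max (card ` ?Ch)"
    using Max_in[of "card ` ?Ch"] finC by fastforce
  have "card D \<le> card C" if "is_chain T le D" for D
    using C that finC by simp
  moreover have "finite D" if "is_chain T le D" for D
    using that assms by (meson finite_subset is_chain_def)
  ultimately have "\<not> (\<exists>D. is_chain T le D \<and> C \<subset> D)"
    by (meson leD psubset_card_mono)
  then show ?thesis using C by (auto simp: is_maxchain_def)
qed

locale fin_poset =
  fixes S :: "'a set" and le :: "'a \<Rightarrow> 'a \<Rightarrow> bool"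
  assumes finite_poset: "finite_poset S le"
begin

lemma fin_poset_dual: "fin_poset S (\<lambda>x y. le y x)"
  using finite_poset unfolding fin_poset_def finite_poset_def poset_on_def by blast

lemma finite: "finite S" and poset: "poset_on S le"
  using finite_poset by (auto simp: finite_poset_def)

lemma refl: "x \<in> S \<Longrightarrow> le x x"
  using poset_on_reflD[OF poset] .

lemma antisym: "x \<in> S \<Longrightarrow> y \<in> S \<Longrightarrow> le x y \<Longrightarrow> le y x \<Longrightarrow> x = y"
  using poset_on_antisymD[OF poset] .

lemma trans: "x \<in> S \<Longrightarrow> y \<in> S \<Longrightarrow> z \<in> S \<Longrightarrow> le x y \<Longrightarrow> le y z \<Longrightarrow> le x z"
  using poset_on_transD[OF poset] .

lemma exists_minimal:
  assumes "A \<noteq> {}" "A \<subseteq> S"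
  shows "\<exists>z\<in>A. \<forall>w\<in>A. \<not> strict le w z"
proof -
  have "finite A" using assms finite finite_subset by blast
  then show ?thesis using assms
  proof (induction A rule: finite_ne_induct)
    case (singleton x)
    then show ?case by (simp add: strict_def)
  next
    case (insert a A)
    then obtain z where z: "z \<in> A" "\<forall>w\<in>A. \<not> strict le w z" by auto
    show ?case
    proof (cases "strict le a z")
      case True
      have "\<not> strict le w a" if "w \<in> insert a A" for w
        using strict_trans[OF poset, of w a z] True insert.prems z that
        by (auto simp: strict_def)
      then show ?thesis by blast
    next
      case False
      then show ?thesis using z by blast
    qed
  qed
qed

lemma exists_maximal:
  assumes "A \<noteq> {}" "A \<subseteq> S"
  shows "\<exists>z\<in>A. \<forall>w\<in>A. \<not> strict le z w"
proof -
  interpret dual: fin_poset S "\<lambda>x y. le y x"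
    by (rule fin_poset_dual)
  show ?thesis using dual.exists_minimal[OF assms] by (auto simp: strict_def)
qed

lemma exists_maximal_above:
  assumes "l \<in> S" shows "\<exists>m. is_maximal S le m \<and> le l m"
proof -
  let ?A = "{w\<in>S. le l w}"
  obtain m where m: "m \<in> ?A" "\<forall>w\<in>?A. \<not> strict le m w"
    using exists_maximal[of ?A] assms refl by blast
  have "\<not> strict le m y" if "y \<in> S" for y
    using m that trans[of l m y] assms by (auto simp: strict_def)
  then show ?thesis using m by (auto simp: is_maximal_def)
qed

lemma exists_sat_chain_between:
  assumes "x \<in> S" "y \<in> S" "le x y"
  shows "\<exists>xs. sat_chain_between S le x y xs"
  using assms
proof (induction "card {z\<in>S. strict le x z \<and> le z y}" arbitrary: x rule: less_induct)
  case less
  show ?case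
  proof (cases "x = y")
    case True
    have "sat_chain_between S le x x [x]"
      using sat_chain_between_refl_iff[OF poset] less.prems(1) by simp
    then show ?thesis using True by blast
  next
    case False
    let ?M = "{z\<in>S. strict le x z \<and> le z y}"
    have "y \<in> ?M" using False less.prems refl by (auto simp: strict_def)
    then obtain z where z: "z \<in> ?M" "\<forall>w\<in>?M. \<not> strict le w z"
      using exists_minimal[of ?M] by blast
    have cov: "covers S le x z"
      unfolding covers_def
    proof (intro conjI notI)
      show "x \<in> S" "z \<in> S" "strict le x z" using less.prems z by auto
      assume "\<exists>w\<in>S. strict le x w \<and> strict le w z"
      then obtain w where "w \<in> S" "strict le x w" "strict le w z" by blast
      then show False using trans[of w z y] z less.prems(2) by (auto simp: strict_def)
    qed
    have "{w\<in>S. strict le z w \<and> le w y} \<subset> ?M"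
      using strict_trans[OF poset, of x z] z less.prems by (auto simp: strict_def)
    then have "card {w\<in>S. strict le z w \<and> le w y} < card ?M"
      using finite by (simp add: psubset_card_mono)
    then obtain xs where xs: "sat_chain_between S le z y xs"
      using less.hyps[of z] z less.prems(2) by blast
    have "xs \<noteq> []" using sat_chain_between_ends(1)[OF xs] .
    with xs have "sat_chain_between S le x y (x # xs)"
      using cov sat_chain_Cons[of S le xs x] by (simp add: sat_chain_between_def)
    then show ?thesis by blast
  qed
qed

lemma exists_cover_above:
  assumes "x \<in> S" "y \<in> S" "strict le x y" shows "\<exists>w. covers S le x w \<and> le w y"
proof -
  obtain xs where c: "sat_chain_between S le x y xs"
    using exists_sat_chain_between assms by (auto simp: strict_def)
  have l: "Suc 0 < length xs"
    using sat_chain_between_nontrivial[OF c] assms by (simp add: strict_def)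
  have "covers S le (xs!0) (xs!Suc 0)"
    using sat_chain_coversD[of S le xs 0] c l by (simp add: sat_chain_between_def)
  moreover have "le (xs!Suc 0) y" using sat_chain_between_bounds(2)[OF poset c l] .
  ultimately show ?thesis using sat_chain_between_ends(2)[OF c] by auto
qed

lemma exists_cover_below:
  assumes "x \<in> S" "y \<in> S" "strict le x y" shows "\<exists>w. covers S le w y \<and> le x w"
proof -
  interpret dual: fin_poset S "\<lambda>x y. le y x"
    by (rule fin_poset_dual)
  have "strict (\<lambda>x y. le y x) y x" using assms by (auto simp: strict_def)
  then obtain w where "covers S (\<lambda>x y. le y x) y w" "le x w"
    using dual.exists_cover_above[of y x] assms by blast
  moreover have "covers S (\<lambda>x y. le y x) y w \<longleftrightarrow> covers S le w y"
    unfolding covers_def strict_def by blast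
  ultimately show ?thesis by blast
qed

lemma EL_interval_of_semi_EL:
  assumes z: "is_minimum S le z" and E: "semi_EL_labeling S le z lam"
    and kl: "k \<in> S" "l \<in> S" "le k l"
  shows "EL_interval S le lam k l"
proof (cases "k = l")
  case True
  then show ?thesis using EL_interval_refl[OF poset] kl by simp
next
  case False
  obtain m where m: "is_maximal S le m" "le l m" using exists_maximal_above kl by blast
  let ?T = "interval S le z m"
  have mS: "m \<in> S" using m by (simp add: is_maximal_def)
  have "c \<in> ?T" if "b \<in> ?T" "c \<in> S" "le c b" for b c
    using that trans[of c b m] mS z by (simp add: interval_def is_minimum_def)
  then have T: "convex_in S le ?T" unfolding convex_in_def interval_def by blast
  have kT: "k \<in> ?T" and lT: "l \<in> ?T"
    using kl mS z m trans[of k l m] by (auto simp: interval_def is_minimum_def)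
  have "EL_labeling ?T le lam" using E m unfolding semi_EL_labeling_def by blast
  moreover have "poset_on ?T le" using poset_on_subset[OF poset] by (simp add: interval_def)
  ultimately have "EL_interval ?T le lam k l"
    using EL_labeling_iff_EL_interval[of ?T le lam] kT lT kl(3) False by (simp add: strict_def)
  then show ?thesis by (rule iffD1[OF EL_interval_convex_iff[OF poset T kT lT]])
qed

end

section \<open>Ranks in semipure posets\<close>

lemma is_maxchainD:
  assumes "is_maxchain T le C"
  shows "C \<subseteq> T" "\<And>a b. a \<in> C \<Longrightarrow> b \<in> C \<Longrightarrow> le a b \<or> le b a"
  using assms unfolding is_maxchain_def is_chain_def by blast+

locale semipure_poset = fin_poset +
  assumes semipure: "semipure S le"
begin

abbreviation "r \<equiv> rank S le"

lemma card_maxchain_down_set: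
  assumes xS: "x \<in> S" and C: "is_maxchain (down_set S le x) le C"
  shows "card C = Suc (r x)"
proof -
  have "x \<in> C"
  proof (rule is_maxchain_insert[OF C])
    show "x \<in> down_set S le x" "le x x" using xS refl[OF xS] by (simp_all add: down_set_def)
    show "le c x \<or> le x c" if "c \<in> C" for c
      using is_maxchainD(1)[OF C] that by (auto simp: down_set_def)
  qed
  moreover have "finite C"
    using is_maxchainD(1)[OF C] finite by (auto simp: down_set_def intro: finite_subset)
  ultimately have cC: "card C = Suc (card C - 1)" by (cases "card C") auto
  have "r x = card C - 1"
    unfolding rank_def
  proof (rule the_equality)
    show "\<exists>C'. is_maxchain (down_set S le x) le C' \<and> card C' = Suc (card C - 1)" using C cC by blast
    fix n assume "\<exists>C'. is_maxchain (down_set S le x) le C' \<and> card C' = Suc n"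
    then obtain C' where C': "is_maxchain (down_set S le x) le C'" "card C' = Suc n" by blast
    have "card C' = card C" using semipure xS C'(1) C unfolding semipure_def by blast
    then show "n = card C - 1" using C'(2) by simp
  qed
  then show ?thesis using cC by simp
qed

lemma rank_covers:
  assumes cov: "covers S le x y"
  shows "r y = Suc (r x)"
proof -
  have xS: "x \<in> S" and yS: "y \<in> S" and xy: "le x y" "x \<noteq> y"
    using cov by (auto simp: covers_def strict_def)
  obtain C where C: "is_maxchain (down_set S le x) le C"
    using exists_maxchain[of "down_set S le x"] finite by (auto simp: down_set_def)
  have Cd: "c \<in> S \<and> le c x" if "c \<in> C" for c
    using is_maxchainD(1)[OF C] that by (auto simp: down_set_def)
  note Cch = is_maxchainD(2)[OF C]
  have "x \<in> C"
    by (rule is_maxchain_insert[OF C]) (use xS refl[OF xS] Cd in \<open>auto simp: down_set_def\<close>)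
  have yC: "y \<notin> C" using Cd antisym[OF xS yS xy(1)] xy(2) by blast
  have "is_maxchain (down_set S le y) le (insert y C)"
    unfolding is_maxchain_def
  proof (intro conjI notI)
    show "is_chain (down_set S le y) le (insert y C)"
      unfolding is_chain_def down_set_def
      using Cd Cch refl[OF yS] yS xy(1) trans[OF _ xS yS] by auto
    assume "\<exists>D. is_chain (down_set S le y) le D \<and> insert y C \<subset> D"
    then obtain D w where D: "is_chain (down_set S le y) le D" "insert y C \<subseteq> D" "w \<in> D" "w \<notin> insert y C"
      by blast
    have wS: "w \<in> S" "le w y" using D unfolding is_chain_def down_set_def by auto
    have wc: "le w c \<or> le c w" if "c \<in> C" for c
      using D that unfolding is_chain_def by blast
    show False
    proof (cases "le w x")
      case True
      then have "w \<in> C"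
        by (intro is_maxchain_insert[OF C]) (use wS wc refl[OF wS(1)] in \<open>auto simp: down_set_def\<close>)
      then show False using D by blast
    next
      case False
      then have "strict le x w" "strict le w y"
        using wc[OF \<open>x \<in> C\<close>] D(4) wS by (auto simp: strict_def)
      then show False using cov wS by (auto simp: covers_def)
    qed
  qed
  then have "card (insert y C) = Suc (r y)" using card_maxchain_down_set yS by blast
  moreover have "finite C" using Cd finite by (meson finite_subset subsetI)
  ultimately show ?thesis using card_maxchain_down_set[OF xS C] yC by simp
qed

lemma rank_minimal:
  assumes xS: "x \<in> S" and mn: "\<And>w. w \<in> S \<Longrightarrow> le w x \<Longrightarrow> w = x"
  shows "r x = 0"
proof -
  have d: "down_set S le x = {x}" using xS mn refl[OF xS] by (auto simp: down_set_def)
  have "is_maxchain (down_set S le x) le {x}"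
    unfolding d is_maxchain_def is_chain_def using refl[OF xS] by auto
  from card_maxchain_down_set[OF xS this] show ?thesis by simp
qed

lemma sat_chain_rank:
  assumes c: "sat_chain S le xs" and "i < length xs"
  shows "r (xs!i) = r (xs!0) + i"
  using assms(2)
proof (induction i)
  case (Suc i)
  then show ?case using rank_covers[OF sat_chain_coversD[OF c]] by simp
qed simp

lemma sat_chain_between_length:
  assumes c: "sat_chain_between S le x y xs"
  shows "length xs = Suc (r y - r x)" "r x \<le> r y"
proof -
  note ends = sat_chain_between_ends[OF c]
  have "r y = r x + (length xs - 1)"
    using sat_chain_rank[of xs "length xs - 1"] c ends by (simp add: sat_chain_between_def)
  then show "length xs = Suc (r y - r x)" "r x \<le> r y" using ends by auto
qed

lemma rank_strict_mono:
  assumes "x \<in> S" "y \<in> S" "strict le x y" shows "r x < r y"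
proof -
  obtain xs where c: "sat_chain_between S le x y xs"
    using exists_sat_chain_between assms by (auto simp: strict_def)
  have "Suc 0 < length xs" using sat_chain_between_nontrivial[OF c] assms by (simp add: strict_def)
  then show ?thesis using sat_chain_between_length[OF c] by simp
qed

lemma rank_mono: "x \<in> S \<Longrightarrow> y \<in> S \<Longrightarrow> le x y \<Longrightarrow> r x \<le> r y"
  using rank_strict_mono[of x y] by (cases "x = y") (auto simp: strict_def)

lemma eq_if_le_rank_le: "x \<in> S \<Longrightarrow> y \<in> S \<Longrightarrow> le x y \<Longrightarrow> r y \<le> r x \<Longrightarrow> x = y"
  using rank_strict_mono[of x y] by (auto simp: strict_def)

end

section \<open>Lazy walks\<close>

definition lazy_walk :: "'a set \<Rightarrow> ('a \<Rightarrow> 'a \<Rightarrow> bool) \<Rightarrow> 'a list \<Rightarrow> bool" where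
  "lazy_walk S le ps \<longleftrightarrow> set ps \<subseteq> S \<and>
     (\<forall>i. Suc i < length ps \<longrightarrow> ps!i = ps!Suc i \<or> covers S le (ps!i) (ps!Suc i))"

text \<open>A stay gets the label \<open>None\<close>, the minimum adjoined to the labels of the second factor.\<close>

definition step_label :: "('a \<Rightarrow> 'a \<Rightarrow> 'l) \<Rightarrow> 'a \<Rightarrow> 'a \<Rightarrow> 'l option" where
  "step_label lam a b = (if a = b then None else Some (lam a b))"

lemma label_seq_step_label_sat_chain:
  "sat_chain S le K \<Longrightarrow> label_seq (step_label lam) K = map Some (label_seq lam K)"
  by (rule nth_equalityI) (auto simp: label_seq_nth step_label_def sat_chain_distinct_Suc)

lemma label_seq_step_label_replicate_append:
  assumes "sat_chain S le K" "hd K = k"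
  shows "label_seq (step_label lam) (replicate j k @ K) = replicate j None @ map Some (label_seq lam K)"
  using assms label_seq_replicate_append[of K k "step_label lam" j]
    label_seq_step_label_sat_chain[OF assms(1)]
  by (simp add: step_label_def sat_chain_def)

context semipure_poset
begin

lemma lazy_walk_rank:
  assumes w: "lazy_walk S le ps" and ij: "i \<le> j" "j < length ps"
  shows "r (ps!j) = r (ps!i) + card {t. i \<le> t \<and> t < j \<and> ps!t \<noteq> ps!Suc t}"
  using ij
proof (induction j rule: dec_induct)
  case base
  then show ?case by simp
next
  case (step j)
  let ?M = "\<lambda>j. {t. i \<le> t \<and> t < j \<and> ps!t \<noteq> ps!Suc t}"
  have fin: "finite (?M j)" by simp
  consider "ps!j = ps!Suc j" | "covers S le (ps!j) (ps!Suc j)"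
    using w step.prems unfolding lazy_walk_def by blast
  then show ?case
  proof cases
    case 1
    then have "?M (Suc j) = ?M j" by (auto simp: less_Suc_eq)
    then show ?thesis using step 1 by simp
  next
    case 2
    then have "?M (Suc j) = insert j (?M j)" using step.hyps
      by (auto simp: less_Suc_eq covers_def strict_def)
    then show ?thesis using step rank_covers[OF 2] fin by simp
  qed
qed

lemma lazy_walk_rank_mono:
  "lazy_walk S le ps \<Longrightarrow> i \<le> j \<Longrightarrow> j < length ps \<Longrightarrow> r (ps!i) \<le> r (ps!j)"
  using lazy_walk_rank by fastforce

lemma lazy_walk_rank_no_stay:
  assumes "lazy_walk S le ps" "i \<le> j" "j < length ps"
    and "\<And>t. i \<le> t \<Longrightarrow> t < j \<Longrightarrow> ps!t \<noteq> ps!Suc t"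
  shows "r (ps!j) = r (ps!i) + (j - i)"
proof -
  have "{t. i \<le> t \<and> t < j \<and> ps!t \<noteq> ps!Suc t} = {i..<j}" using assms(4) by auto
  then show ?thesis using lazy_walk_rank[OF assms(1-3)] by simp
qed

lemma lazy_walk_rank_stay:
  assumes "lazy_walk S le ps" "i \<le> t" "t < j" "j < length ps" "ps!t = ps!Suc t"
  shows "r (ps!j) < r (ps!i) + (j - i)"
proof -
  have "{t. i \<le> t \<and> t < j \<and> ps!t \<noteq> ps!Suc t} \<subseteq> {i..<j} - {t}" using assms(5) by auto
  then have "card {t. i \<le> t \<and> t < j \<and> ps!t \<noteq> ps!Suc t} \<le> card ({i..<j} - {t})"
    by (intro card_mono) auto
  also have "\<dots> < j - i" using assms(2,3) by simp
  finally show ?thesis using lazy_walk_rank[OF assms(1), of i j] assms(2-4) by simp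
qed

lemma lazy_walk_stays_after:
  assumes w: "lazy_walk S le ps" and len: "length ps = Suc n"
    and gain: "r (ps!n) = r (ps!0) + m" and i: "i < n - m"
  shows "\<exists>t. i \<le> t \<and> t < n \<and> ps!t = ps!Suc t"
proof (rule ccontr)
  assume "\<not> ?thesis"
  then have "r (ps!n) = r (ps!i) + (n - i)" using lazy_walk_rank_no_stay[OF w, of i n] i len by auto
  moreover have "r (ps!0) \<le> r (ps!i)" using lazy_walk_rank_mono[OF w, of 0 i] i len by simp
  ultimately show False using gain i by simp
qed

lemma lazy_walk_decompose:
  assumes w: "lazy_walk S le ps" and len: "length ps = Suc n"
    and gain: "r (ps!n) = r (ps!0) + m" and stays: "\<And>i. i < n - m \<Longrightarrow> ps!i = ps!Suc i"
  shows "ps = replicate (n - m) (ps!0) @ drop (n - m) ps"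
    and "sat_chain_between S le (ps!0) (ps!n) (drop (n - m) ps)"
proof -
  have const: "ps!i = ps!0" if "i \<le> n - m" for i
    using that
  proof (induction i)
    case (Suc i)
    then show ?case using stays[of i] by simp
  qed simp
  show "ps = replicate (n - m) (ps!0) @ drop (n - m) ps"
  proof (rule nth_equalityI)
    fix i assume "i < length ps"
    then show "ps!i = (replicate (n - m) (ps!0) @ drop (n - m) ps)!i"
      using const[of i] len by (cases "i < n - m") (simp_all add: nth_append)
  qed (use len in simp)
  have "card {t. 0 \<le> t \<and> t < n \<and> ps!t \<noteq> ps!Suc t} \<le> card {0..<n}"
    by (rule card_mono) auto
  then have "m \<le> n" using lazy_walk_rank[OF w, of 0 n] len gain by simp
  let ?K = "drop (n - m) ps"
  have moves: "ps!t \<noteq> ps!Suc t" if "n - m \<le> t" "t < n" for t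
  proof
    assume "ps!t = ps!Suc t"
    then have "r (ps!n) < r (ps!(n - m)) + (n - (n - m))"
      using lazy_walk_rank_stay[OF w that] len by simp
    then show False using gain const[of "n - m"] \<open>m \<le> n\<close> by simp
  qed
  have "sat_chain S le ?K"
    unfolding sat_chain_def
  proof (intro conjI allI impI)
    show "?K \<noteq> []" using len by simp
    have "set ps \<subseteq> S" using w by (simp add: lazy_walk_def)
    then show "set ?K \<subseteq> S" using set_drop_subset[of "n - m" ps] by blast
    fix j assume "Suc j < length ?K"
    then have j: "Suc (n - m + j) < length ps" using len by simp
    then have "ps!(n - m + j) = ps!Suc (n - m + j) \<or> covers S le (ps!(n - m + j)) (ps!Suc (n - m + j))"
      using w unfolding lazy_walk_def by blast
    then have "covers S le (ps!(n - m + j)) (ps!Suc (n - m + j))"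
      using moves[of "n - m + j"] j len by auto
    then show "covers S le (?K!j) (?K!Suc j)" using j by simp
  qed
  then show "sat_chain_between S le (ps!0) (ps!n) ?K"
    using const[of "n - m"] len \<open>m \<le> n\<close> by (intro sat_chain_betweenI) auto
qed

end

lemma hat_carrier_simps [simp]:
  "HBot \<in> hat_carrier S" "HTop \<in> hat_carrier S" "Mid x \<in> hat_carrier S \<longleftrightarrow> x \<in> S"
  by (auto simp: hat_carrier_def)

lemma hat_carrier_cases:
  assumes "x \<in> hat_carrier S"
  obtains "x = HBot" | "x = HTop" | a where "x = Mid a" "a \<in> S"
  using assms by (auto simp: hat_carrier_def)

lemma hat_le_simps [simp]:
  "hat_le le HBot y" "hat_le le x HTop" "\<not> hat_le le (Mid a) HBot"
  "\<not> hat_le le HTop HBot" "\<not> hat_le le HTop (Mid b)"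
  by (cases x; simp)+

lemma hat_le_HBot_iff: "hat_le le x HBot \<longleftrightarrow> x = HBot"
  by (cases x) auto

lemma hat_le_HTop_iff: "hat_le le HTop x \<longleftrightarrow> x = HTop"
  by (cases x) auto

lemma poset_on_hat:
  assumes P: "poset_on S le" shows "poset_on (hat_carrier S) (hat_le le)"
  unfolding poset_on_def
proof (intro conjI ballI impI)
  fix x assume "x \<in> hat_carrier S" then show "hat_le le x x"
    by (cases rule: hat_carrier_cases) (auto simp: poset_on_reflD[OF P])
next
  fix x y assume x: "x \<in> hat_carrier S" and y: "y \<in> hat_carrier S" and "hat_le le x y \<and> hat_le le y x"
  then show "x = y"
    by (cases rule: hat_carrier_cases[OF x]; cases rule: hat_carrier_cases[OF y])
      (auto simp: hat_le_HBot_iff hat_le_HTop_iff poset_on_antisymD[OF P])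
next
  fix x y z assume x: "x \<in> hat_carrier S" and y: "y \<in> hat_carrier S" and z: "z \<in> hat_carrier S"
    and "hat_le le x y \<and> hat_le le y z"
  then show "hat_le le x z"
    by (cases rule: hat_carrier_cases[OF x]; cases rule: hat_carrier_cases[OF y];
        cases rule: hat_carrier_cases[OF z])
      (auto simp: hat_le_HBot_iff hat_le_HTop_iff intro: poset_on_transD[OF P])
qed

lemma covers_hat_HBot_Mid:
  "covers (hat_carrier S) (hat_le le) HBot (Mid y) \<longleftrightarrow> y \<in> S \<and> (\<forall>w\<in>S. le w y \<longrightarrow> w = y)"
  unfolding covers_def strict_def hat_carrier_def by auto

lemma covers_hat_Mid_HTop:
  "covers (hat_carrier S) (hat_le le) (Mid x) HTop \<longleftrightarrow> x \<in> S \<and> (\<forall>w\<in>S. le x w \<longrightarrow> w = x)"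
  unfolding covers_def strict_def hat_carrier_def by auto

lemma covers_hat_Mid_Mid:
  "covers (hat_carrier S) (hat_le le) (Mid x) (Mid y) \<longleftrightarrow> covers S le x y"
  unfolding covers_def strict_def hat_carrier_def by auto

lemma covers_hat_HBot_HTop: "covers (hat_carrier S) (hat_le le) HBot HTop \<longleftrightarrow> S = {}"
  unfolding covers_def strict_def hat_carrier_def by auto

lemma not_covers_hat_HBot: "\<not> covers (hat_carrier S) (hat_le le) x HBot"
  unfolding covers_def strict_def by (auto simp: hat_le_HBot_iff)

lemma not_covers_hat_HTop: "\<not> covers (hat_carrier S) (hat_le le) HTop x"
  unfolding covers_def strict_def by (auto simp: hat_le_HTop_iff)

lemma sat_chain_hat_ends:
  assumes "sat_chain (hat_carrier S) (hat_le le) xs" "Suc i < length xs"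
  shows "xs!i \<noteq> HTop" "xs!Suc i \<noteq> HBot"
  using sat_chain_coversD[OF assms] not_covers_hat_HBot not_covers_hat_HTop by metis+

text \<open>The value at \<open>HTop\<close> is junk; \<open>hat_rank\<close> is only used below the top.\<close>

fun hat_rank :: "('a \<Rightarrow> nat) \<Rightarrow> 'a hat \<Rightarrow> nat" where
  "hat_rank f HBot = 0" | "hat_rank f (Mid x) = Suc (f x)" | "hat_rank f HTop = 0"

lemma (in semipure_poset) hat_rank_covers:
  assumes cv: "covers (hat_carrier S) (hat_le le) a b" and bT: "b \<noteq> HTop"
  shows "hat_rank r b = Suc (hat_rank r a)"
proof (cases a)
  case HBot
  then obtain y where y: "b = Mid y" using cv bT not_covers_hat_HBot by (cases b) auto
  then have "y \<in> S" "\<forall>w\<in>S. le w y \<longrightarrow> w = y" using cv HBot by (auto simp: covers_hat_HBot_Mid)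
  then have "r y = 0" using rank_minimal by blast
  then show ?thesis using HBot y by simp
next
  case (Mid x)
  then obtain y where y: "b = Mid y" using cv bT not_covers_hat_HBot by (cases b) auto
  then have "covers S le x y" using cv Mid by (simp add: covers_hat_Mid_Mid)
  then show ?thesis using rank_covers Mid y by simp
next
  case HTop
  then show ?thesis using cv not_covers_hat_HTop by blast
qed

lemma (in semipure_poset) sat_chain_hat_rank:
  assumes c: "sat_chain (hat_carrier S) (hat_le le) X" and nT: "\<And>i. i < length X \<Longrightarrow> X!i \<noteq> HTop"
    and "i < length X"
  shows "hat_rank r (X!i) = hat_rank r (X!0) + i"
  using assms(3)
proof (induction i)
  case (Suc i)
  then show ?case using hat_rank_covers[OF sat_chain_coversD[OF c]] nT by simp
qed simp

section \<open>The Rees product\<close>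

fun hat_fst :: "('a \<times> 'b) hat \<Rightarrow> 'a hat" where
  "hat_fst HBot = HBot" | "hat_fst (Mid xk) = Mid (fst xk)" | "hat_fst HTop = HTop"

text \<open>The bottom of the hatted Rees product plays the role of the pair of the two minima, so its
  second coordinate is the minimum \<open>z\<close> of the second factor (the value at the top is junk).\<close>

fun hat_snd :: "'b \<Rightarrow> ('a \<times> 'b) hat \<Rightarrow> 'b" where
  "hat_snd z HBot = z" | "hat_snd z (Mid xk) = snd xk" | "hat_snd z HTop = z"

fun hat_pair :: "'a hat \<Rightarrow> 'b \<Rightarrow> ('a \<times> 'b) hat" where
  "hat_pair HBot q = HBot" | "hat_pair (Mid x) q = Mid (x, q)" | "hat_pair HTop q = HTop"

lemma hat_pair_fst_snd [simp]: "hat_pair (hat_fst a) (hat_snd z a) = a"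
  by (cases a) auto

lemma hat_fst_pair [simp]: "hat_fst (hat_pair a q) = a"
  by (cases a) auto

lemma hat_prod_cases:
  obtains "a = HBot" | "a = HTop" | x k where "a = Mid (x, k)"
  by (cases a) auto

definition rees_snd_label ::
  "('b \<Rightarrow> 'b \<Rightarrow> 'l) \<Rightarrow> 'b \<Rightarrow> ('a \<times> 'b) hat \<Rightarrow> ('a \<times> 'b) hat \<Rightarrow> 'l option" where
  "rees_snd_label lam z a b = (if b = HTop then None else step_label lam (hat_snd z a) (hat_snd z b))"

lemma rees_label_eq:
  assumes "a \<noteq> HTop" "b \<noteq> HBot"
  shows "rees_label lam1 lam2 z a b = (lam1 (hat_fst a) (hat_fst b), rees_snd_label lam2 z a b)"
  using assms
  by (cases a rule: hat_prod_cases; cases b rule: hat_prod_cases)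
    (auto simp: rees_snd_label_def step_label_def)

lemma label_seq_rees_label:
  assumes "\<And>i. Suc i < length D \<Longrightarrow> D!i \<noteq> HTop \<and> D!Suc i \<noteq> HBot"
  shows "label_seq (rees_label lam1 lam2 z) D =
    zip (label_seq lam1 (map hat_fst D)) (label_seq (rees_snd_label lam2 z) D)"
  by (rule nth_equalityI) (auto simp: label_seq_nth rees_label_eq assms)

lemma label_seq_rees_snd_label:
  assumes "\<And>i. i < length D \<Longrightarrow> D!i \<noteq> HTop"
  shows "label_seq (rees_snd_label lam z) D = label_seq (step_label lam) (map (hat_snd z) D)"
  by (rule nth_equalityI) (auto simp: label_seq_nth rees_snd_label_def assms)

locale rees =
  fixes S1 :: "'a set" and le1 :: "'a \<Rightarrow> 'a \<Rightarrow> bool"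
    and S2 :: "'b set" and le2 :: "'b \<Rightarrow> 'b \<Rightarrow> bool"
    and z2 :: 'b
  assumes fp1: "finite_poset S1 le1" and sp1: "semipure S1 le1"
    and fp2: "finite_poset S2 le2" and sp2: "semipure S2 le2"
    and z2_min: "is_minimum S2 le2 z2"
begin

sublocale P1: semipure_poset S1 le1
  using fp1 sp1 by unfold_locales
sublocale P2: semipure_poset S2 le2
  using fp2 sp2 by unfold_locales

abbreviation "R \<equiv> rees_carrier S1 le1 S2 le2"
abbreviation "leR \<equiv> rees_le S1 le1 S2 le2"
abbreviation "H \<equiv> hat_carrier R"
abbreviation "leH \<equiv> hat_le leR"
abbreviation "H1 \<equiv> hat_carrier S1"
abbreviation "leH1 \<equiv> hat_le le1"
abbreviation "r1 \<equiv> rank S1 le1"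
abbreviation "r2 \<equiv> rank S2 le2"
abbreviation "snd2 \<equiv> hat_snd z2"

lemma rees_mem_iff: "(x, k) \<in> R \<longleftrightarrow> x \<in> S1 \<and> k \<in> S2 \<and> r2 k \<le> r1 x"
  by (simp add: rees_carrier_def)

lemma rees_le_iff:
  "leR (x, k) (y, l) \<longleftrightarrow> le1 x y \<and> le2 k l \<and> int (r2 l) - int (r2 k) \<le> int (r1 y) - int (r1 x)"
  by (simp add: rees_le_def)

lemma z2_in: "z2 \<in> S2" and z2_le: "k \<in> S2 \<Longrightarrow> le2 z2 k"
  using z2_min by (auto simp: is_minimum_def)

lemma rank_z2: "r2 z2 = 0"
  using P2.rank_minimal[OF z2_in] z2_le P2.antisym z2_in by blast

lemma eq_z2_if_rank_0: "k \<in> S2 \<Longrightarrow> r2 k = 0 \<Longrightarrow> k = z2"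
  using P2.eq_if_le_rank_le[OF z2_in _ z2_le] rank_z2 by auto

lemma rees_le_same_fst:
  assumes "k \<in> S2" "l \<in> S2" "leR (x, k) (x, l)" shows "k = l"
  using assms P2.eq_if_le_rank_le[of k l] by (auto simp: rees_le_iff)

lemma poset_rees: "poset_on R leR"
  unfolding poset_on_def
proof (intro conjI ballI impI)
  fix u assume "u \<in> R" then show "leR u u"
    by (cases u) (auto simp: rees_le_iff rees_mem_iff P1.refl P2.refl)
next
  fix u v assume u: "u \<in> R" and v: "v \<in> R" and "leR u v \<and> leR v u"
  then show "u = v"
    by (cases u; cases v) (auto simp: rees_le_iff rees_mem_iff intro: P1.antisym P2.antisym)
next
  fix u v w assume u: "u \<in> R" and v: "v \<in> R" and w: "w \<in> R" and "leR u v \<and> leR v w"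
  then show "leR u w"
    by (cases u; cases v; cases w) (auto simp: rees_le_iff rees_mem_iff intro: P1.trans P2.trans)
qed

lemma poset_H: "poset_on H leH"
  using poset_on_hat[OF poset_rees] .

lemma poset_H1: "poset_on H1 leH1"
  using poset_on_hat[OF P1.poset] .

lemma hat_fst_in: "a \<in> H \<Longrightarrow> hat_fst a \<in> H1"
  by (cases a rule: hat_prod_cases) (auto simp: rees_mem_iff)

lemma hat_snd_in: "a \<in> H \<Longrightarrow> snd2 a \<in> S2"
  by (cases a rule: hat_prod_cases) (auto simp: rees_mem_iff z2_in)

end

context rees
begin

lemma covers_rees_fst:
  assumes xk: "(x,k) \<in> R" and yl: "(y,l) \<in> R" and cov: "covers R leR (x,k) (y,l)"
  shows "covers S1 le1 x y"
proof (rule ccontr)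
  assume nc: "\<not> covers S1 le1 x y"
  have mem: "x \<in> S1" "k \<in> S2" "r2 k \<le> r1 x" "y \<in> S1" "l \<in> S2" "r2 l \<le> r1 y"
    using xk yl by (auto simp: rees_mem_iff)
  have le: "le1 x y" "le2 k l" and rk: "int (r2 l) - int (r2 k) \<le> int (r1 y) - int (r1 x)"
    and ne: "(x,k) \<noteq> (y,l)"
    using cov by (auto simp: covers_def strict_def rees_le_iff)
  have between: "z = (x,k) \<or> z = (y,l)" if "z \<in> R" "leR (x,k) z" "leR z (y,l)" for z
    using cov that unfolding covers_def strict_def by blast
  have "x \<noteq> y"
  proof
    assume "x = y"
    then have "k = l" using rees_le_same_fst[of k l x] mem cov by (simp add: covers_def strict_def)
    then show False using ne \<open>x = y\<close> by simp
  qed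
  then obtain w where w: "covers S1 le1 x w" "le1 w y"
    using P1.exists_cover_above[OF mem(1) mem(4)] le by (auto simp: strict_def)
  have wS: "w \<in> S1" and rw: "r1 w = Suc (r1 x)" using w P1.rank_covers by (auto simp: covers_def)
  have wy: "w \<noteq> y" using w nc by auto
  have lxw: "le1 x w" "w \<noteq> x" using w by (auto simp: covers_def strict_def)
  have rwy: "r1 w < r1 y" using P1.rank_strict_mono[OF wS mem(4)] w wy by (simp add: strict_def)
  show False
  proof (cases "int (r2 l) - int (r2 k) \<le> int (r1 y) - int (r1 w)")
    case True
    have "(w,k) \<in> R" using wS mem rw by (simp add: rees_mem_iff)
    moreover have "leR (x,k) (w,k)" using lxw P2.refl mem rw by (simp add: rees_le_iff)
    moreover have "leR (w,k) (y,l)" using w le True by (simp add: rees_le_iff)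
    ultimately show False using between[of "(w,k)"] lxw wy by auto
  next
    case False
    then have "strict le2 k l" using le rwy by (auto simp: strict_def)
    then obtain q where q: "covers S2 le2 k q" "le2 q l"
      using P2.exists_cover_above[OF mem(2) mem(5)] by blast
    have qS: "q \<in> S2" and rq: "r2 q = Suc (r2 k)" using q P2.rank_covers by (auto simp: covers_def)
    have lkq: "le2 k q" using q by (auto simp: covers_def strict_def)
    have "(w,q) \<in> R" using wS qS rq rw mem by (simp add: rees_mem_iff)
    moreover have "leR (x,k) (w,q)" using lxw lkq rq rw by (simp add: rees_le_iff)
    moreover have "leR (w,q) (y,l)" using w q rq rw rk False by (simp add: rees_le_iff)
    ultimately show False using between[of "(w,q)"] lxw wy by auto
  qed
qed

lemma covers_rees_snd:
  assumes xk: "(x,k) \<in> R" and yl: "(y,l) \<in> R" and cov: "covers R leR (x,k) (y,l)"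
  shows "k = l \<or> covers S2 le2 k l"
proof (rule ccontr)
  assume "\<not> (k = l \<or> covers S2 le2 k l)"
  then have kl: "k \<noteq> l" and nc: "\<not> covers S2 le2 k l" by auto
  have mem: "k \<in> S2" "l \<in> S2" using xk yl by (auto simp: rees_mem_iff)
  have le: "le2 k l" and rk: "int (r2 l) - int (r2 k) \<le> int (r1 y) - int (r1 x)"
    using cov by (auto simp: covers_def strict_def rees_le_iff)
  have ry: "r1 y = Suc (r1 x)" using P1.rank_covers[OF covers_rees_fst[OF assms]] .
  obtain q where q: "covers S2 le2 k q" "le2 q l"
    using P2.exists_cover_above[OF mem] le kl by (auto simp: strict_def)
  have qS: "q \<in> S2" and rq: "r2 q = Suc (r2 k)" using q P2.rank_covers by (auto simp: covers_def)
  have "q \<noteq> l" using q nc by auto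
  then have "r2 q < r2 l" using P2.rank_strict_mono[OF qS mem(2)] q by (simp add: strict_def)
  then show False using rk ry rq by simp
qed

lemma covers_reesI:
  assumes xk: "(x,k) \<in> R" and yl: "(y,l) \<in> R"
    and h: "covers S1 le1 x y" "k = l \<or> covers S2 le2 k l"
  shows "covers R leR (x,k) (y,l)"
proof -
  have mem: "x \<in> S1" "k \<in> S2" "y \<in> S1" "l \<in> S2" using xk yl by (auto simp: rees_mem_iff)
  have ry: "r1 y = Suc (r1 x)" using P1.rank_covers h by blast
  have lxy: "le1 x y" "x \<noteq> y" using h by (auto simp: covers_def strict_def)
  have lk: "le2 k l" and rl: "r2 l \<le> Suc (r2 k)"
    using h P2.refl mem P2.rank_covers[of k l] by (auto simp: covers_def strict_def)
  have rl0: "r2 k \<le> r2 l" using P2.rank_mono mem lk by blast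
  show "covers R leR (x,k) (y,l)" unfolding covers_def strict_def
  proof (intro conjI notI)
    show "(x,k) \<in> R" "(y,l) \<in> R" by (fact xk, fact yl)
    show "leR (x,k) (y,l)" using lxy lk ry rl rl0 by (simp add: rees_le_iff)
    show "(x,k) = (y,l) \<Longrightarrow> False" using lxy by simp
    assume "\<exists>z\<in>R. (leR (x,k) z \<and> (x,k) \<noteq> z) \<and> (leR z (y,l) \<and> z \<noteq> (y,l))"
    then obtain p q where pq: "(p,q) \<in> R" "leR (x,k) (p,q)" "(x,k) \<noteq> (p,q)" "leR (p,q) (y,l)" "(p,q) \<noteq> (y,l)"
      by auto
    have pS: "p \<in> S1" "q \<in> S2" using pq by (auto simp: rees_mem_iff)
    have lp: "le1 x p" "le1 p y" using pq by (auto simp: rees_le_iff)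
    have "p = x \<or> p = y"
    proof (rule ccontr)
      assume "\<not> (p = x \<or> p = y)"
      then have "strict le1 x p" "strict le1 p y" using lp by (auto simp: strict_def)
      then show False using h pS by (auto simp: covers_def)
    qed
    then show False
    proof
      assume "p = x"
      then have "k = q" using rees_le_same_fst[of k q x] pq pS mem by auto
      then show False using pq \<open>p = x\<close> by simp
    next
      assume "p = y"
      then have "q = l" using rees_le_same_fst[of q l y] pq pS mem by auto
      then show False using pq \<open>p = y\<close> by simp
    qed
  qed
qed

lemma covers_rees_iff:
  assumes "(x,k) \<in> R" "(y,l) \<in> R"
  shows "covers R leR (x,k) (y,l) \<longleftrightarrow> covers S1 le1 x y \<and> (k = l \<or> covers S2 le2 k l)"
  using covers_rees_fst[OF assms] covers_rees_snd[OF assms] covers_reesI[OF assms] by blast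

lemma minimal_rees_iff:
  assumes yl: "(y,l) \<in> R"
  shows "(\<forall>w\<in>R. leR w (y,l) \<longrightarrow> w = (y,l)) \<longleftrightarrow> (\<forall>w\<in>S1. le1 w y \<longrightarrow> w = y)"
proof
  assume mn: "\<forall>w\<in>R. leR w (y,l) \<longrightarrow> w = (y,l)"
  have mem: "y \<in> S1" "l \<in> S2" "r2 l \<le> r1 y" using yl by (auto simp: rees_mem_iff)
  show "\<forall>w\<in>S1. le1 w y \<longrightarrow> w = y"
  proof (intro ballI impI, rule ccontr)
    fix w assume w: "w \<in> S1" "le1 w y" "w \<noteq> y"
    then have swy: "strict le1 w y" by (simp add: strict_def)
    obtain w' where w': "covers S1 le1 w' y" "le1 w w'" using P1.exists_cover_below[OF w(1) mem(1) swy] by blast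
    have w'S: "w' \<in> S1" and rw: "r1 y = Suc (r1 w')" using w' P1.rank_covers by (auto simp: covers_def)
    have lw'y: "le1 w' y" "w' \<noteq> y" using w' by (auto simp: covers_def strict_def)
    show False
    proof (cases "r2 l \<le> r1 w'")
      case True
      have "(w',l) \<in> R" using w'S mem True by (simp add: rees_mem_iff)
      moreover have "leR (w',l) (y,l)" using lw'y P2.refl mem rw by (simp add: rees_le_iff)
      ultimately show False using mn lw'y by auto
    next
      case False
      then have "l \<noteq> z2" using rank_z2 by auto
      then have szl: "strict le2 z2 l" using z2_le mem by (simp add: strict_def)
      obtain q where q: "covers S2 le2 q l" "le2 z2 q" using P2.exists_cover_below[OF z2_in mem(2) szl] by blast
      have qS: "q \<in> S2" and rq: "r2 l = Suc (r2 q)" using q P2.rank_covers by (auto simp: covers_def)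
      have lql: "le2 q l" "q \<noteq> l" using q by (auto simp: covers_def strict_def)
      have "(w',q) \<in> R" using w'S qS rq rw mem False by (simp add: rees_mem_iff)
      moreover have "leR (w',q) (y,l)" using lw'y lql rq rw by (simp add: rees_le_iff)
      ultimately show False using mn lw'y by auto
    qed
  qed
next
  assume mn: "\<forall>w\<in>S1. le1 w y \<longrightarrow> w = y"
  have mem: "y \<in> S1" "l \<in> S2" "r2 l \<le> r1 y" using yl by (auto simp: rees_mem_iff)
  have "r1 y = 0" using P1.rank_minimal mem mn by blast
  then have lz: "l = z2" using eq_z2_if_rank_0 mem by simp
  show "\<forall>w\<in>R. leR w (y,l) \<longrightarrow> w = (y,l)"
  proof (intro ballI impI)
    fix w assume w: "w \<in> R" "leR w (y,l)"
    obtain p q where pq: "w = (p,q)" by (cases w)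
    have "p \<in> S1" "q \<in> S2" using w pq by (auto simp: rees_mem_iff)
    moreover have "le1 p y" "le2 q l" using w pq by (auto simp: rees_le_iff)
    ultimately show "w = (y,l)" using mn pq lz z2_le P2.antisym z2_in by auto
  qed
qed

lemma maximal_rees_iff:
  assumes xk: "(x,k) \<in> R"
  shows "(\<forall>w\<in>R. leR (x,k) w \<longrightarrow> w = (x,k)) \<longleftrightarrow> (\<forall>w\<in>S1. le1 x w \<longrightarrow> w = x)"
proof
  assume mx: "\<forall>w\<in>R. leR (x,k) w \<longrightarrow> w = (x,k)"
  have mem: "x \<in> S1" "k \<in> S2" "r2 k \<le> r1 x" using xk by (auto simp: rees_mem_iff)
  show "\<forall>w\<in>S1. le1 x w \<longrightarrow> w = x"
  proof (intro ballI impI, rule ccontr)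
    fix w assume w: "w \<in> S1" "le1 x w" "w \<noteq> x"
    then have sxw: "strict le1 x w" by (simp add: strict_def)
    obtain w' where w': "covers S1 le1 x w'" "le1 w' w" using P1.exists_cover_above[OF mem(1) w(1) sxw] by blast
    have w'S: "w' \<in> S1" and rw: "r1 w' = Suc (r1 x)" using w' P1.rank_covers by (auto simp: covers_def)
    have lxw': "le1 x w'" "w' \<noteq> x" using w' by (auto simp: covers_def strict_def)
    have "(w',k) \<in> R" using w'S mem rw by (simp add: rees_mem_iff)
    moreover have "leR (x,k) (w',k)" using lxw' P2.refl mem rw by (simp add: rees_le_iff)
    ultimately show False using mx lxw' by auto
  qed
next
  assume mx: "\<forall>w\<in>S1. le1 x w \<longrightarrow> w = x"
  have mem: "x \<in> S1" "k \<in> S2" using xk by (auto simp: rees_mem_iff)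
  show "\<forall>w\<in>R. leR (x,k) w \<longrightarrow> w = (x,k)"
  proof (intro ballI impI)
    fix w assume w: "w \<in> R" "leR (x,k) w"
    obtain p q where pq: "w = (p,q)" by (cases w)
    have pS: "p \<in> S1" "q \<in> S2" using w pq by (auto simp: rees_mem_iff)
    moreover have "le1 x p" using w pq by (auto simp: rees_le_iff)
    ultimately have "p = x" using mx by auto
    then have "k = q" using rees_le_same_fst[of k q x] w pq mem pS by auto
    then show "w = (x,k)" using pq \<open>p = x\<close> by simp
  qed
qed

lemma rees_empty_iff: "R = {} \<longleftrightarrow> S1 = {}"
proof
  assume "R = {}"
  show "S1 = {}"
  proof (rule ccontr)
    assume "S1 \<noteq> {}" then obtain x where "x \<in> S1" by blast
    then have "(x, z2) \<in> R" using z2_in rank_z2 by (simp add: rees_mem_iff)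
    then show False using \<open>R = {}\<close> by simp
  qed
next
  assume "S1 = {}" then show "R = {}" by (auto simp: rees_carrier_def)
qed

lemma covers_hat_rees_iff:
  assumes a: "a \<in> H" and b: "b \<in> H"
  shows "covers H leH a b \<longleftrightarrow> covers H1 leH1 (hat_fst a) (hat_fst b) \<and>
           (b = HTop \<or> snd2 a = snd2 b \<or> covers S2 le2 (snd2 a) (snd2 b))"
proof (cases a rule: hat_prod_cases)
  case 1 note aB = this
  show ?thesis
  proof (cases b rule: hat_prod_cases)
    case 1 then show ?thesis using aB by (simp add: not_covers_hat_HBot)
  next
    case 2 then show ?thesis using aB by (simp add: covers_hat_HBot_HTop rees_empty_iff)
  next
    case (3 y l)
    have yl: "(y,l) \<in> R" using b 3 by simp
    have mem: "y \<in> S1" "l \<in> S2" "r2 l \<le> r1 y" using yl by (auto simp: rees_mem_iff)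
    have "(\<forall>w\<in>S1. le1 w y \<longrightarrow> w = y) \<Longrightarrow> l = z2"
    proof -
      assume "\<forall>w\<in>S1. le1 w y \<longrightarrow> w = y"
      then have "r1 y = 0" using P1.rank_minimal mem by blast
      then show "l = z2" using eq_z2_if_rank_0 mem by simp
    qed
    then show ?thesis using aB 3 yl mem minimal_rees_iff[OF yl] by (auto simp: covers_hat_HBot_Mid)
  qed
next
  case 2 then show ?thesis by (simp add: not_covers_hat_HTop)
next
  case (3 x k) note aM = this
  have xk: "(x,k) \<in> R" using a 3 by simp
  show ?thesis
  proof (cases b rule: hat_prod_cases)
    case 1 then show ?thesis using aM by (simp add: not_covers_hat_HBot)
  next
    case 2 then show ?thesis using aM xk maximal_rees_iff[OF xk] by (simp add: covers_hat_Mid_HTop rees_mem_iff)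
  next
    case (3 y l)
    have yl: "(y,l) \<in> R" using b 3 by simp
    show ?thesis using aM 3 covers_rees_iff[OF xk yl] by (simp add: covers_hat_Mid_Mid)
  qed
qed

lemma sat_chain_hat_rees_decompose:
  assumes c: "sat_chain H leH D"
  shows "sat_chain H1 leH1 (map hat_fst D)"
    and "\<And>i. Suc i < length D \<Longrightarrow>
      D!Suc i = HTop \<or> snd2 (D!i) = snd2 (D!Suc i) \<or> covers S2 le2 (snd2 (D!i)) (snd2 (D!Suc i))"
proof -
  have inH: "\<And>i. i < length D \<Longrightarrow> D!i \<in> H" using c sat_chain_nth_in by blast
  have cv: "\<And>i. Suc i < length D \<Longrightarrow> covers H leH (D!i) (D!Suc i)" using c by (simp add: sat_chain_def)
  show "sat_chain H1 leH1 (map hat_fst D)"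
    unfolding sat_chain_def
  proof (intro conjI allI impI)
    show "map hat_fst D \<noteq> []" using c by (simp add: sat_chain_def)
    show "set (map hat_fst D) \<subseteq> H1" using inH hat_fst_in by (auto simp: in_set_conv_nth)
    fix i assume i: "Suc i < length (map hat_fst D)"
    then show "covers H1 leH1 (map hat_fst D ! i) (map hat_fst D ! Suc i)"
      using covers_hat_rees_iff[OF inH inH] cv by simp
  qed
  fix i assume i: "Suc i < length D"
  show "D!Suc i = HTop \<or> snd2 (D!i) = snd2 (D!Suc i) \<or> covers S2 le2 (snd2 (D!i)) (snd2 (D!Suc i))"
    using covers_hat_rees_iff[OF inH inH] cv i by simp
qed

lemma sat_chain_hat_reesI:
  assumes "D \<noteq> []" and sub: "\<And>i. i < length D \<Longrightarrow> D!i \<in> H"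
    and c1: "\<And>i. Suc i < length D \<Longrightarrow> covers H1 leH1 (hat_fst (D!i)) (hat_fst (D!Suc i))"
    and c2: "\<And>i. Suc i < length D \<Longrightarrow>
      D!Suc i = HTop \<or> snd2 (D!i) = snd2 (D!Suc i) \<or> covers S2 le2 (snd2 (D!i)) (snd2 (D!Suc i))"
  shows "sat_chain H leH D"
  unfolding sat_chain_def
proof (intro conjI allI impI)
  show "D \<noteq> []" by fact
  show "set D \<subseteq> H" using sub by (auto simp: in_set_conv_nth)
  fix i assume i: "Suc i < length D"
  then show "covers H leH (D!i) (D!Suc i)" using covers_hat_rees_iff[OF sub sub] c1 c2 by simp
qed

end

lemma label_seq_rees_label_sat_chain:
  assumes "sat_chain (hat_carrier S) (hat_le le) D"
  shows "label_seq (rees_label lam1 lam2 z) D =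
    zip (label_seq lam1 (map hat_fst D)) (label_seq (rees_snd_label lam2 z) D)"
  using sat_chain_hat_ends[OF assms] by (intro label_seq_rees_label) blast

context rees
begin

lemma hat_fst_eq_HBot: "hat_fst u = HBot \<longleftrightarrow> u = HBot"
  by (cases u rule: hat_prod_cases) auto

lemma hat_fst_eq_HTop: "hat_fst u = HTop \<longleftrightarrow> u = HTop"
  by (cases u rule: hat_prod_cases) auto

lemma sat_chain_to_top_lift:
  assumes uH: "u \<in> H" and uT: "u \<noteq> HTop"
    and X: "sat_chain_between H1 leH1 (hat_fst u) HTop X"
  shows "sat_chain_between H leH u HTop (map (\<lambda>a. hat_pair a (snd2 u)) X)"
    and "\<And>i. Suc i < length X \<Longrightarrow> snd2 (map (\<lambda>a. hat_pair a (snd2 u)) X ! i) = snd2 u"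
proof -
  let ?k = "snd2 u" and ?C = "map (\<lambda>a. hat_pair a (snd2 u)) X"
  have Xc: "sat_chain H1 leH1 X" using X by (simp add: sat_chain_between_def)
  note ends = sat_chain_between_ends[OF X]
  have kS: "?k \<in> S2" using hat_snd_in[OF uH] .
  have bot_0: "i = 0" if "i < length X" "X!i = HBot" for i
  proof (rule ccontr)
    assume "i \<noteq> 0"
    then have "strict leH1 (X!0) (X!i)" using sat_chain_strict_nth[OF poset_H1 Xc, of 0 i] that by simp
    then show False using that by (simp add: strict_def hat_le_HBot_iff)
  qed
  have snd_C: "snd2 (?C!i) = ?k" if i: "i < length X" "X!i \<noteq> HTop" for i
  proof (cases "X!i")
    case HBot
    then have "hat_fst u = HBot" using bot_0[OF i(1)] ends by simp
    then have "u = HBot" by (simp add: hat_fst_eq_HBot)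
    then show ?thesis using i HBot by simp
  qed (use i in simp_all)
  then show "\<And>i. Suc i < length X \<Longrightarrow> snd2 (?C!i) = ?k"
    using sat_chain_hat_ends(1)[OF Xc] by simp
  have C_in: "?C!i \<in> H" if i: "i < length X" for i
  proof (cases "X!i")
    case (Mid x)
    have xS: "x \<in> S1" using sat_chain_nth_in[OF Xc i] Mid by simp
    have "r2 ?k \<le> r1 x"
    proof (cases u rule: hat_prod_cases)
      case 1
      then show ?thesis using rank_z2 by simp
    next
      case 2
      then show ?thesis using uT by simp
    next
      case (3 x0 k0)
      then have "x0 \<in> S1" "r2 k0 \<le> r1 x0" using uH by (auto simp: rees_mem_iff)
      moreover have "le1 x0 x" using sat_chain_between_bounds(1)[OF poset_H1 X i] Mid 3 by simp
      ultimately show ?thesis using P1.rank_mono[of x0 x] xS 3 by simp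
    qed
    then show ?thesis using i Mid xS kS by (simp add: rees_mem_iff)
  qed (use i in simp_all)
  have "sat_chain H leH ?C"
  proof (rule sat_chain_hat_reesI)
    show "?C \<noteq> []" using ends by simp
    show "?C!i \<in> H" if "i < length ?C" for i using C_in that by simp
    show "covers H1 leH1 (hat_fst (?C!i)) (hat_fst (?C!Suc i))" if "Suc i < length ?C" for i
      using sat_chain_coversD[OF Xc] that by simp
    show "?C!Suc i = HTop \<or> snd2 (?C!i) = snd2 (?C!Suc i) \<or> covers S2 le2 (snd2 (?C!i)) (snd2 (?C!Suc i))"
      if "Suc i < length ?C" for i
      using snd_C[of i] snd_C[of "Suc i"] sat_chain_hat_ends(1)[OF Xc, of i] that
      by (cases "X!Suc i = HTop") simp_all
  qed
  then show "sat_chain_between H leH u HTop ?C"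
    using ends by (intro sat_chain_betweenI) simp_all
qed

lemma label_seq_rees_snd_to_top_lift:
  assumes uH: "u \<in> H" and uT: "u \<noteq> HTop"
    and X: "sat_chain_between H1 leH1 (hat_fst u) HTop X"
  shows "label_seq (rees_snd_label lam z2) (map (\<lambda>a. hat_pair a (snd2 u)) X) = replicate (length X - 1) None"
proof (rule nth_equalityI)
  fix i assume "i < length (label_seq (rees_snd_label lam z2) (map (\<lambda>a. hat_pair a (snd2 u)) X))"
  then have i: "Suc i < length X" by simp
  show "label_seq (rees_snd_label lam z2) (map (\<lambda>a. hat_pair a (snd2 u)) X) ! i =
      replicate (length X - 1) None ! i"
  proof (cases "Suc (Suc i) < length X")
    case True
    then show ?thesis
      using sat_chain_to_top_lift(2)[OF uH uT X] i
      by (simp add: label_seq_nth rees_snd_label_def step_label_def)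
  next
    case False
    then have "Suc i = length X - 1" using i by simp
    then have "X ! Suc i = HTop" using sat_chain_between_ends(3)[OF X] by simp
    then show ?thesis using i by (simp add: label_seq_nth rees_snd_label_def)
  qed
qed simp

lemma sat_chain_to_top_project:
  assumes "sat_chain_between H leH u HTop D"
  shows "sat_chain_between H1 leH1 (hat_fst u) HTop (map hat_fst D)"
  using assms sat_chain_hat_rees_decompose(1)
  by (auto simp: sat_chain_between_def sat_chain_def last_map hd_map)

lemma sat_chain_to_top_flat:
  assumes D: "sat_chain_between H leH u HTop D"
    and none: "\<And>i. i < length D - 1 \<Longrightarrow> label_seq (rees_snd_label lam z2) D ! i = None"
  shows "D = map (\<lambda>a. hat_pair a (snd2 u)) (map hat_fst D)"
proof -
  have Dc: "sat_chain H leH D" using D by (simp add: sat_chain_between_def)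
  note ends = sat_chain_between_ends[OF D]
  have snd_const: "snd2 (D!i) = snd2 u" if "i < length D" "D!i \<noteq> HTop" for i
    using that
  proof (induction i)
    case 0
    then show ?case using ends by simp
  next
    case (Suc i)
    have "rees_snd_label lam z2 (D!i) (D!Suc i) = None"
      using none[of i] Suc.prems by (simp add: label_seq_nth)
    then have "snd2 (D!i) = snd2 (D!Suc i)"
      using Suc.prems by (simp add: rees_snd_label_def step_label_def split: if_splits)
    moreover have "D!i \<noteq> HTop" using sat_chain_hat_ends(1)[OF Dc] Suc.prems by blast
    ultimately show ?case using Suc by simp
  qed
  show ?thesis
  proof (rule nth_equalityI)
    fix i assume i: "i < length D"
    show "D!i = map (\<lambda>a. hat_pair a (snd2 u)) (map hat_fst D) ! i"
      using i snd_const[OF i] hat_pair_fst_snd[of "D!i" z2] by (cases "D!i = HTop") auto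
  qed simp
qed

end

locale rees_EL = rees +
  fixes lam1 :: "'a hat \<Rightarrow> 'a hat \<Rightarrow> 'l1::order" and lam2 :: "'b \<Rightarrow> 'b \<Rightarrow> 'l2::order"
  assumes EL1: "EL_labeling (hat_carrier S1) (hat_le le1) lam1"
    and EL2: "semi_EL_labeling S2 le2 z2 lam2"
begin

abbreviation "lab \<equiv> rees_label lam1 lam2 z2"

lemma EL_interval_H1: "a \<in> H1 \<Longrightarrow> b \<in> H1 \<Longrightarrow> strict leH1 a b \<Longrightarrow> EL_interval H1 leH1 lam1 a b"
  using EL1 EL_labeling_iff_EL_interval[OF poset_H1] by blast

lemma EL_interval_S2: "k \<in> S2 \<Longrightarrow> l \<in> S2 \<Longrightarrow> le2 k l \<Longrightarrow> EL_interval S2 le2 lam2 k l"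
  using P2.EL_interval_of_semi_EL[OF z2_min EL2] .

lemma lex_prec_to_top:
  assumes uH: "u \<in> H" and uT: "u \<noteq> HTop"
    and C1: "sat_chain_between H1 leH1 (hat_fst u) HTop C1"
    and C1_least: "\<And>D. sat_chain_between H1 leH1 (hat_fst u) HTop D \<Longrightarrow> D \<noteq> C1 \<Longrightarrow>
      lex_prec (label_seq lam1 C1) (label_seq lam1 D)"
    and D: "sat_chain_between H leH u HTop D"
    and DC: "D \<noteq> map (\<lambda>a. hat_pair a (snd2 u)) C1"
  shows "lex_prec (label_seq lab (map (\<lambda>a. hat_pair a (snd2 u)) C1)) (label_seq lab D)"
proof -
  let ?C = "map (\<lambda>a. hat_pair a (snd2 u)) C1"
  let ?snd = "label_seq (rees_snd_label lam2 z2)"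
  have fst_C: "map hat_fst ?C = C1" by (simp add: comp_def)
  have fst_D: "sat_chain_between H1 leH1 (hat_fst u) HTop (map hat_fst D)"
    using sat_chain_to_top_project[OF D] .
  have snd_C: "?snd ?C = replicate (length C1 - 1) None"
    using label_seq_rees_snd_to_top_lift[OF uH uT C1] .
  have fst_le: "nth_agree (label_seq lam1 C1) (label_seq lam1 (map hat_fst D)) \<or>
      lex_prec (label_seq lam1 C1) (label_seq lam1 (map hat_fst D))"
    using C1_least[OF fst_D] by (cases "map hat_fst D = C1") auto
  have snd_le: "nth_agree (?snd ?C) (?snd D) \<or> lex_prec (?snd ?C) (?snd D)"
  proof (cases "\<exists>i. i < length (?snd ?C) \<and> i < length (?snd D) \<and> ?snd D ! i \<noteq> None")
    case True
    then show ?thesis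
      using lex_prec_replicate_None_append[of _ "length C1 - 1" "?snd D" "[]"] snd_C by auto
  next
    case False
    then show ?thesis unfolding nth_agree_def snd_C by auto
  qed
  have some_less: "lex_prec (label_seq lam1 C1) (label_seq lam1 (map hat_fst D)) \<or> lex_prec (?snd ?C) (?snd D)"
  proof (rule ccontr)
    assume n: "\<not> ?thesis"
    then have fst_eq: "map hat_fst D = C1" using C1_least[OF fst_D] by blast
    then have "length D = length C1" by (metis length_map)
    then have "?snd D ! i = None" if "i < length D - 1" for i
      using snd_le n that snd_C unfolding nth_agree_def by auto
    then have "D = map (\<lambda>a. hat_pair a (snd2 u)) (map hat_fst D)" using sat_chain_to_top_flat[OF D] by blast
    then show False using fst_eq DC by simp
  qed
  have "sat_chain H leH ?C" "sat_chain H leH D"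
    using sat_chain_to_top_lift(1)[OF uH uT C1] D by (simp_all add: sat_chain_between_def)
  then have "label_seq lab ?C = zip (label_seq lam1 C1) (?snd ?C)"
    and "label_seq lab D = zip (label_seq lam1 (map hat_fst D)) (?snd D)"
    using label_seq_rees_label_sat_chain[of R leR _ lam1 lam2 z2] fst_C
    by simp_all
  moreover have "lex_prec (zip (label_seq lam1 C1) (?snd ?C)) (zip (label_seq lam1 (map hat_fst D)) (?snd D))"
    using snd_C by (intro lex_prec_zip[OF _ _ fst_le snd_le some_less]) simp_all
  ultimately show ?thesis by simp
qed

text \<open>The step into the top has second label \<open>None\<close>, so a weakly increasing chain never moves
  its second coordinate.\<close>

lemma weakly_increasing_to_top:
  assumes uT: "u \<noteq> HTop" and D: "sat_chain_between H leH u HTop D" and wD: "weakly_increasing lab D"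
  shows "D = map (\<lambda>a. hat_pair a (snd2 u)) (map hat_fst D)" and "weakly_increasing lam1 (map hat_fst D)"
proof -
  let ?snd = "label_seq (rees_snd_label lam2 z2)"
  have "sat_chain H leH D" using D by (simp add: sat_chain_between_def)
  then have sorted: "weakly_increasing lam1 (map hat_fst D)" "sorted_wrt (\<le>) (?snd D)"
    using wD by (simp_all add: weakly_increasing_iff_sorted sorted_wrt_zip_iff label_seq_rees_label_sat_chain)
  then show "weakly_increasing lam1 (map hat_fst D)" by simp
  have len: "Suc 0 < length D" using sat_chain_between_nontrivial[OF D uT] .
  have last_none: "?snd D ! (length D - 2) = None"
    using len sat_chain_between_ends(3)[OF D]
    by (simp add: label_seq_nth rees_snd_label_def numeral_2_eq_2 Suc_diff_Suc)
  have "?snd D ! i = None" if i: "i < length D - 1" for i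
  proof (cases "i = length D - 2")
    case False
    then have "?snd D ! i \<le> ?snd D ! (length D - 2)"
      using sorted_wrt_nth_less[OF sorted(2), of i "length D - 2"] i len by simp
    then show ?thesis using last_none less_eq_option_None_is_None by simp
  qed (use last_none in simp)
  then show "D = map (\<lambda>a. hat_pair a (snd2 u)) (map hat_fst D)"
    using sat_chain_to_top_flat[OF D] by blast
qed

lemma EL_interval_to_top:
  assumes uH: "u \<in> H" and uT: "u \<noteq> HTop"
  shows "EL_interval H leH lab u HTop"
proof -
  have "hat_fst u \<in> H1" "strict leH1 (hat_fst u) HTop"
    using hat_fst_in[OF uH] uT by (auto simp: strict_def hat_fst_eq_HTop)
  then have "EL_interval H1 leH1 lam1 (hat_fst u) HTop" using EL_interval_H1 by simp
  then obtain C1 where C1: "sat_chain_between H1 leH1 (hat_fst u) HTop C1" "weakly_increasing lam1 C1"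
    and C1_unique: "\<And>D. sat_chain_between H1 leH1 (hat_fst u) HTop D \<Longrightarrow>
      weakly_increasing lam1 D \<Longrightarrow> D = C1"
    and C1_least: "\<And>D. sat_chain_between H1 leH1 (hat_fst u) HTop D \<Longrightarrow> D \<noteq> C1 \<Longrightarrow>
      lex_prec (label_seq lam1 C1) (label_seq lam1 D)"
    by (elim EL_intervalE) blast
  let ?C = "map (\<lambda>a. hat_pair a (snd2 u)) C1"
  have C: "sat_chain_between H leH u HTop ?C" using sat_chain_to_top_lift(1)[OF uH uT C1(1)] .
  then have "sat_chain H leH ?C" by (simp add: sat_chain_between_def)
  then have "weakly_increasing lab ?C"
    using C1(2) label_seq_rees_snd_to_top_lift[OF uH uT C1(1), of lam2]
    by (simp add: weakly_increasing_iff_sorted label_seq_rees_label_sat_chain comp_def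
        sorted_wrt_zip_iff sorted_wrt_iff_nth_less)
  moreover have "D = ?C" if "sat_chain_between H leH u HTop D" "weakly_increasing lab D" for D
    using weakly_increasing_to_top[OF uT that] C1_unique sat_chain_to_top_project[OF that(1)]
    by metis
  moreover have "lex_prec (label_seq lab ?C) (label_seq lab D)"
    if "sat_chain_between H leH u HTop D" "D \<noteq> ?C" for D
    using lex_prec_to_top[OF uH uT C1(1) C1_least that] .
  ultimately show ?thesis using C by (intro EL_intervalI)
qed

end

definition hat_zip :: "'a hat list \<Rightarrow> 'b list \<Rightarrow> ('a \<times> 'b) hat list" where
  "hat_zip X Q = map (\<lambda>(a, q). hat_pair a q) (zip X Q)"

lemma length_hat_zip [simp]: "length (hat_zip X Q) = min (length X) (length Q)"
  by (simp add: hat_zip_def)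

lemma nth_hat_zip [simp]: "i < length X \<Longrightarrow> i < length Q \<Longrightarrow> hat_zip X Q ! i = hat_pair (X!i) (Q!i)"
  by (simp add: hat_zip_def)

lemma map_hat_fst_hat_zip: "length X = length Q \<Longrightarrow> map hat_fst (hat_zip X Q) = X"
  by (rule nth_equalityI) simp_all

lemma hat_zip_fst_snd: "hat_zip (map hat_fst D) (map (hat_snd z) D) = D"
  by (rule nth_equalityI) simp_all

locale rees_interval = rees +
  fixes u :: "('a \<times> 'b) hat" and y :: 'a and l :: 'b
  assumes u_in: "u \<in> H" and yl_in: "(y, l) \<in> R" and u_below: "strict leH u (Mid (y, l))"
begin

text \<open>Every maximal chain of \<open>[u, (y, l)]\<close> has \<open>steps\<close> covers, of which the second
  coordinate rises in exactly \<open>rises\<close> and stays in the others.\<close>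

abbreviation "steps \<equiv> hat_rank r1 (Mid y) - hat_rank r1 (hat_fst u)"
abbreviation "rises \<equiv> r2 l - r2 (snd2 u)"

lemma y_in: "y \<in> S1" and l_in: "l \<in> S2" and snd_u_in: "snd2 u \<in> S2"
  using yl_in hat_snd_in[OF u_in] by (auto simp: rees_mem_iff)

lemma u_cases:
  obtains "u = HBot" | x k where "u = Mid (x, k)" "(x, k) \<in> R" "strict le1 x y"
proof (cases u rule: hat_prod_cases)
  case (3 x k)
  have xk: "(x, k) \<in> R" using u_in 3 by simp
  have le: "leR (x, k) (y, l)" and ne: "(x, k) \<noteq> (y, l)" using u_below 3 by (auto simp: strict_def)
  have "x \<noteq> y"
  proof
    assume "x = y"
    then have "k = l" using rees_le_same_fst[of k l x] le xk l_in by (auto simp: rees_mem_iff)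
    then show False using ne \<open>x = y\<close> by simp
  qed
  then have "strict le1 x y" using le by (simp add: rees_le_iff strict_def)
  then show ?thesis using 3 xk that by simp
qed (use u_below that in \<open>auto simp: strict_def\<close>)

lemma snd_u_le: "le2 (snd2 u) l"
  by (cases rule: u_cases) (use z2_le l_in u_below in \<open>auto simp: strict_def rees_le_iff\<close>)

lemma rank_snd_u_le: "r2 (snd2 u) \<le> r2 l"
  using P2.rank_mono[OF snd_u_in l_in snd_u_le] .

lemma fst_u_below: "strict leH1 (hat_fst u) (Mid y)"
  by (cases rule: u_cases) (auto simp: strict_def)

lemma rises_le_steps: "rises \<le> steps"
proof (cases rule: u_cases)
  case 1
  then show ?thesis using yl_in rank_z2 by (simp add: rees_mem_iff)
next
  case (2 x k)
  then have "int (r2 l) - int (r2 k) \<le> int (r1 y) - int (r1 x)"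
    using u_below by (simp add: strict_def rees_le_iff)
  then show ?thesis using 2 rank_snd_u_le by simp
qed

text \<open>This inequality keeps a chain that makes its stays first inside the Rees product.\<close>

lemma rank_room:
  assumes "0 < i"
  shows "r2 (snd2 u) + (i - (steps - rises)) < hat_rank r1 (hat_fst u) + i"
proof (cases rule: u_cases)
  case 1
  moreover have "rises < steps"
    using 1 yl_in rank_z2 by (simp add: rees_mem_iff)
  ultimately show ?thesis using assms rank_z2 by simp
next
  case (2 x k)
  then have "r2 k \<le> r1 x" by (simp add: rees_mem_iff)
  then show ?thesis using 2 by simp
qed

lemma sat_chain_fst_facts:
  assumes X: "sat_chain_between H1 leH1 (hat_fst u) (Mid y) X"
  shows "length X = Suc steps"
    and "\<And>i. i < length X \<Longrightarrow> X!i \<noteq> HTop"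
    and "\<And>i. i < length X \<Longrightarrow> hat_rank r1 (X!i) = hat_rank r1 (hat_fst u) + i"
    and "\<And>i. i < length X \<Longrightarrow> 0 < i \<Longrightarrow> X!i \<noteq> HBot"
proof -
  have Xc: "sat_chain H1 leH1 X" using X by (simp add: sat_chain_between_def)
  note ends = sat_chain_between_ends[OF X]
  show notT: "X!i \<noteq> HTop" if "i < length X" for i
    using sat_chain_between_bounds(2)[OF poset_H1 X that] by (auto simp: hat_le_HTop_iff)
  show rk: "hat_rank r1 (X!i) = hat_rank r1 (hat_fst u) + i" if "i < length X" for i
    using P1.sat_chain_hat_rank[OF Xc notT that] ends by simp
  show "length X = Suc steps" using rk[of "length X - 1"] ends by simp
  show "X!i \<noteq> HBot" if "i < length X" "0 < i" for i
  proof
    assume "X!i = HBot"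
    moreover have "strict leH1 (X!0) (X!i)" using sat_chain_strict_nth[OF poset_H1 Xc, of 0 i] that by simp
    ultimately show False by (simp add: strict_def hat_le_HBot_iff)
  qed
qed

end

lemma (in semipure_poset) lazy_walk_replicate_append:
  assumes K: "sat_chain_between S le k l K"
  shows "lazy_walk S le (replicate j k @ K)"
    and "i < j + length K \<Longrightarrow> r ((replicate j k @ K)!i) = r k + (i - j)"
proof -
  have Kc: "sat_chain S le K" using K by (simp add: sat_chain_between_def)
  note ends = sat_chain_between_ends[OF K]
  have kS: "k \<in> S" using sat_chain_nth_in[OF Kc, of 0] ends by simp
  show "lazy_walk S le (replicate j k @ K)"
    unfolding lazy_walk_def
  proof (intro conjI allI impI)
    show "set (replicate j k @ K) \<subseteq> S" using Kc kS by (auto simp: sat_chain_def)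
    fix i assume i: "Suc i < length (replicate j k @ K)"
    show "(replicate j k @ K)!i = (replicate j k @ K)!Suc i \<or>
        covers S le ((replicate j k @ K)!i) ((replicate j k @ K)!Suc i)"
    proof (cases "Suc i \<le> j")
      case True
      then show ?thesis using ends by (cases "Suc i = j") (auto simp: nth_append)
    next
      case False
      then have "Suc i - j = Suc (i - j)" by simp
      then show ?thesis using sat_chain_coversD[OF Kc, of "i - j"] i False by (simp add: nth_append)
    qed
  qed
  show "r ((replicate j k @ K)!i) = r k + (i - j)" if "i < j + length K"
    using that sat_chain_rank[OF Kc, of "i - j"] ends by (simp add: nth_append)
qed

context rees_interval
begin

lemma sat_chain_mid_lift:
  assumes X: "sat_chain_between H1 leH1 (hat_fst u) (Mid y) X"
    and K: "sat_chain_between S2 le2 (snd2 u) l K"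
  defines "Q \<equiv> replicate (steps - rises) (snd2 u) @ K"
  shows "sat_chain_between H leH u (Mid (y, l)) (hat_zip X Q)"
    and "map snd2 (hat_zip X Q) = Q" and "length Q = length X"
proof -
  let ?C = "hat_zip X Q"
  note X_facts = sat_chain_fst_facts[OF X]
  have Xc: "sat_chain H1 leH1 X" using X by (simp add: sat_chain_between_def)
  note X_ends = sat_chain_between_ends[OF X] and K_ends = sat_chain_between_ends[OF K]
  have lenK: "length K = Suc rises"
    using P2.sat_chain_between_length(1)[OF K] by simp
  show lenQ: "length Q = length X"
    using lenK X_facts(1) rises_le_steps by (simp add: Q_def)
  have walk: "lazy_walk S2 le2 Q"
    and rankQ: "\<And>i. i < length Q \<Longrightarrow> r2 (Q!i) = r2 (snd2 u) + (i - (steps - rises))"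
    using P2.lazy_walk_replicate_append[OF K] by (auto simp: Q_def)
  have Q_in: "Q!i \<in> S2" if "i < length Q" for i
    using walk that unfolding lazy_walk_def by (meson nth_mem subsetD)
  have Q0: "Q!0 = snd2 u" using K_ends by (cases "steps - rises") (simp_all add: Q_def)
  have "steps - rises + rises = steps" by (rule le_add_diff_inverse2[OF rises_le_steps])
  then have "Q!steps = Q!(length (replicate (steps - rises) (snd2 u)) + rises)"
    by (simp only: length_replicate)
  then have Q_last: "Q!steps = l"
    using K_ends lenK unfolding Q_def by (simp only: nth_append_length_plus) simp
  have fst_C: "hat_fst (?C!i) = X!i" if "i < length X" for i
    using that lenQ by simp
  have snd_C: "snd2 (?C!i) = Q!i" if i: "i < length X" for i
  proof (cases "X!i")
    case HBot
    then have "i = 0" using X_facts(4)[OF i] by auto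
    then have "hat_fst u = HBot" using HBot X_ends by simp
    then have "u = HBot" unfolding hat_fst_eq_HBot .
    then show ?thesis using HBot \<open>i = 0\<close> Q0 i lenQ by simp
  qed (use i lenQ X_facts(2) in simp_all)
  have C_in: "?C!i \<in> H" if i: "i < length X" for i
  proof (cases "i = 0")
    case True
    then show ?thesis using X_ends Q0 u_in lenQ by simp
  next
    case False
    then obtain x where x: "X!i = Mid x" using X_facts(2,4)[OF i] by (cases "X!i") auto
    have xS: "x \<in> S1" using sat_chain_nth_in[OF Xc i] x by simp
    have "r2 (Q!i) < Suc (r1 x)"
      using rankQ[of i] rank_room[of i] X_facts(3)[OF i] x False i lenQ by simp
    then show ?thesis using x xS Q_in[of i] i lenQ by (simp add: rees_mem_iff)
  qed
  have "sat_chain H leH ?C"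
  proof (rule sat_chain_hat_reesI)
    have "length ?C = length X" using lenQ by simp
    then show "?C \<noteq> []" using X_ends(1) by (metis length_0_conv)
    show "?C!i \<in> H" if "i < length ?C" for i using C_in that lenQ by simp
    show "covers H1 leH1 (hat_fst (?C!i)) (hat_fst (?C!Suc i))" if "Suc i < length ?C" for i
      using sat_chain_coversD[OF Xc] that fst_C lenQ by simp
    show "?C!Suc i = HTop \<or> snd2 (?C!i) = snd2 (?C!Suc i) \<or> covers S2 le2 (snd2 (?C!i)) (snd2 (?C!Suc i))"
      if "Suc i < length ?C" for i
      using walk that snd_C lenQ unfolding lazy_walk_def by simp
  qed
  then show "sat_chain_between H leH u (Mid (y, l)) ?C"
    using X_ends Q0 Q_last X_facts(1) lenQ by (intro sat_chain_betweenI) simp_all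
  show "map snd2 ?C = Q"
    using snd_C lenQ by (intro nth_equalityI) simp_all
qed

lemma sat_chain_mid_project:
  assumes D: "sat_chain_between H leH u (Mid (y, l)) D"
  shows "length D = Suc steps"
    and "sat_chain_between H1 leH1 (hat_fst u) (Mid y) (map hat_fst D)"
    and "lazy_walk S2 le2 (map snd2 D)"
    and "map snd2 D ! 0 = snd2 u" and "map snd2 D ! steps = l"
    and "label_seq (rees_label lam1 lam2 z2) D =
      zip (label_seq lam1 (map hat_fst D)) (label_seq (step_label lam2) (map snd2 D))"
proof -
  have Dc: "sat_chain H leH D" using D by (simp add: sat_chain_between_def)
  note ends = sat_chain_between_ends[OF D]
  show fst_D: "sat_chain_between H1 leH1 (hat_fst u) (Mid y) (map hat_fst D)"
    using D sat_chain_hat_rees_decompose(1)[OF Dc]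
    by (auto simp: sat_chain_between_def sat_chain_def last_map hd_map)
  show len: "length D = Suc steps" using sat_chain_fst_facts(1)[OF fst_D] by simp
  have notT: "D!i \<noteq> HTop" if "i < length D" for i
    using sat_chain_between_bounds(2)[OF poset_H D that] by (auto simp: hat_le_HTop_iff)
  show "lazy_walk S2 le2 (map snd2 D)"
    unfolding lazy_walk_def
  proof (intro conjI allI impI)
    show "set (map snd2 D) \<subseteq> S2"
      using hat_snd_in Dc by (auto simp: sat_chain_def)
    fix i assume "Suc i < length (map snd2 D)"
    then show "map snd2 D ! i = map snd2 D ! Suc i \<or> covers S2 le2 (map snd2 D ! i) (map snd2 D ! Suc i)"
      using sat_chain_hat_rees_decompose(2)[OF Dc, of i] notT[of "Suc i"] by simp
  qed
  show "map snd2 D ! 0 = snd2 u" using ends by simp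
  show "map snd2 D ! steps = l" using ends len by simp
  show "label_seq (rees_label lam1 lam2 z2) D =
      zip (label_seq lam1 (map hat_fst D)) (label_seq (step_label lam2) (map snd2 D))"
    unfolding label_seq_rees_label_sat_chain[OF Dc]
    by (subst label_seq_rees_snd_label) (use notT in auto)
qed

end

locale rees_EL_interval = rees_EL + rees_interval
begin

lemma sat_chain_mid_walk_decompose:
  assumes D: "sat_chain_between H leH u (Mid (y, l)) D"
    and none: "\<And>i. i < steps - rises \<Longrightarrow> label_seq (step_label lam2) (map snd2 D) ! i = None"
  obtains K' where "sat_chain_between S2 le2 (snd2 u) l K'"
    and "map snd2 D = replicate (steps - rises) (snd2 u) @ K'"
    and "label_seq (step_label lam2) (map snd2 D) =
      replicate (steps - rises) None @ map Some (label_seq lam2 K')"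
proof -
  let ?ps = "map snd2 D"
  note proj = sat_chain_mid_project[OF D]
  have len: "length ?ps = Suc steps" using proj(1) by simp
  have stay: "?ps!i = ?ps!Suc i" if "i < steps - rises" for i
    using none[OF that] that len by (simp add: label_seq_nth step_label_def split: if_splits)
  have gain: "r2 (?ps!steps) = r2 (?ps!0) + rises"
    using proj(4,5) rank_snd_u_le by simp
  note decomp = P2.lazy_walk_decompose[OF proj(3) len gain stay]
  let ?K = "drop (steps - rises) ?ps"
  have K: "sat_chain_between S2 le2 (snd2 u) l ?K" using decomp(2) proj(4,5) by simp
  have ps: "?ps = replicate (steps - rises) (snd2 u) @ ?K" using decomp(1) proj(4) by simp
  have "label_seq (step_label lam2) ?ps = replicate (steps - rises) None @ map Some (label_seq lam2 ?K)"
    using K ps label_seq_step_label_replicate_append[of S2 le2 ?K "snd2 u" lam2 "steps - rises"]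
    by (simp add: sat_chain_between_def)
  then show ?thesis using that K ps by blast
qed

text \<open>Since \<open>None\<close> is the least label, a weakly increasing chain makes all its stays first.\<close>

lemma weakly_increasing_mid_decompose:
  assumes D: "sat_chain_between H leH u (Mid (y, l)) D" and wD: "weakly_increasing lab D"
  obtains K' where "sat_chain_between S2 le2 (snd2 u) l K'" "weakly_increasing lam2 K'"
    and "map snd2 D = replicate (steps - rises) (snd2 u) @ K'"
    and "weakly_increasing lam1 (map hat_fst D)"
proof -
  let ?SD = "label_seq (step_label lam2) (map snd2 D)"
  note proj = sat_chain_mid_project[OF D]
  have sorted: "weakly_increasing lam1 (map hat_fst D)" "sorted_wrt (\<le>) ?SD"
    using wD proj(1) proj(6)[of lam1 lam2] by (simp_all add: weakly_increasing_iff_sorted sorted_wrt_zip_iff)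
  have "?SD ! i = None" if i: "i < steps - rises" for i
  proof (rule ccontr)
    assume ne: "?SD ! i \<noteq> None"
    have "r2 (map snd2 D ! steps) = r2 (map snd2 D ! 0) + rises"
      using proj(4,5) rank_snd_u_le by simp
    then obtain t where t: "i \<le> t" "t < steps" "map snd2 D ! t = map snd2 D ! Suc t"
      using P2.lazy_walk_stays_after[OF proj(3), of steps rises i] proj(1) i by auto
    then have "?SD ! t = None" using proj(1) by (simp add: label_seq_nth step_label_def)
    moreover have "?SD ! i \<le> ?SD ! t"
      using sorted_wrt_nth_less[OF sorted(2), of i t] t proj(1) by (cases "i = t") auto
    ultimately show False using ne by (simp add: less_eq_option_None_is_None)
  qed
  then obtain K' where K': "sat_chain_between S2 le2 (snd2 u) l K'"
    "map snd2 D = replicate (steps - rises) (snd2 u) @ K'"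
    "?SD = replicate (steps - rises) None @ map Some (label_seq lam2 K')"
    using sat_chain_mid_walk_decompose[OF D] by blast
  have "weakly_increasing lam2 K'"
    using sorted(2) K'(3) by (simp add: weakly_increasing_iff_sorted sorted_wrt_replicate_None_append)
  then show ?thesis using that K' sorted(1) by blast
qed

end

context rees_EL_interval
begin

lemma label_seq_step_label_chain:
  assumes "sat_chain_between S2 le2 (snd2 u) l K"
  shows "label_seq (step_label lam2) (replicate (steps - rises) (snd2 u) @ K) =
    replicate (steps - rises) None @ map Some (label_seq lam2 K)"
  using assms sat_chain_between_ends(1,2)[OF assms]
    label_seq_step_label_replicate_append[of S2 le2 K "snd2 u" lam2]
  by (simp add: sat_chain_between_def hd_conv_nth)

lemma lex_prec_mid_snd:
  assumes K: "sat_chain_between S2 le2 (snd2 u) l K"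
    and K_least: "\<And>D. sat_chain_between S2 le2 (snd2 u) l D \<Longrightarrow> D \<noteq> K \<Longrightarrow>
      lex_prec (label_seq lam2 K) (label_seq lam2 D)"
    and D: "sat_chain_between H leH u (Mid (y, l)) D"
  shows "lex_prec (label_seq (step_label lam2) (replicate (steps - rises) (snd2 u) @ K))
      (label_seq (step_label lam2) (map snd2 D)) \<or>
    map snd2 D = replicate (steps - rises) (snd2 u) @ K"
proof -
  let ?j = "steps - rises" and ?k = "snd2 u"
  let ?SD = "label_seq (step_label lam2) (map snd2 D)"
  note SC = label_seq_step_label_chain[OF K]
  show ?thesis
  proof (cases "\<exists>i < ?j. ?SD ! i \<noteq> None")
    case True
    then obtain i where i: "i < ?j" "?SD ! i \<noteq> None" by blast
    moreover have "i < length ?SD" using i(1) sat_chain_mid_project(1)[OF D] by simp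
    ultimately show ?thesis unfolding SC by (intro disjI1 lex_prec_replicate_None_append)
  next
    case False
    then obtain K' where K': "sat_chain_between S2 le2 ?k l K'" "map snd2 D = replicate ?j ?k @ K'"
      "?SD = replicate ?j None @ map Some (label_seq lam2 K')"
      using sat_chain_mid_walk_decompose[OF D] by blast
    show ?thesis
    proof (cases "K' = K")
      case False
      then have "lex_prec (label_seq lam2 K) (label_seq lam2 K')" using K_least K'(1) by blast
      then show ?thesis unfolding SC K'(3) by (intro disjI1 lex_prec_append lex_prec_map_Some)
    qed (use K' in simp)
  qed
qed

lemma lex_prec_mid:
  assumes C1: "sat_chain_between H1 leH1 (hat_fst u) (Mid y) C1"
    and K: "sat_chain_between S2 le2 (snd2 u) l K"
    and C1_least: "\<And>D. sat_chain_between H1 leH1 (hat_fst u) (Mid y) D \<Longrightarrow> D \<noteq> C1 \<Longrightarrow>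
      lex_prec (label_seq lam1 C1) (label_seq lam1 D)"
    and K_least: "\<And>D. sat_chain_between S2 le2 (snd2 u) l D \<Longrightarrow> D \<noteq> K \<Longrightarrow>
      lex_prec (label_seq lam2 K) (label_seq lam2 D)"
    and D: "sat_chain_between H leH u (Mid (y, l)) D"
    and DC: "D \<noteq> hat_zip C1 (replicate (steps - rises) (snd2 u) @ K)"
  shows "lex_prec (label_seq lab (hat_zip C1 (replicate (steps - rises) (snd2 u) @ K))) (label_seq lab D)"
proof -
  let ?j = "steps - rises" and ?k = "snd2 u"
  let ?step = "label_seq (step_label lam2)"
  let ?Q = "replicate ?j ?k @ K"
  let ?C = "hat_zip C1 ?Q"
  let ?SC = "?step ?Q" and ?SD = "?step (map snd2 D)"
  note lift = sat_chain_mid_lift[OF C1 K]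
  note proj = sat_chain_mid_project[OF D]
  have fst_C: "map hat_fst ?C = C1" using lift(3) by (simp add: map_hat_fst_hat_zip)
  have fst_le: "nth_agree (label_seq lam1 C1) (label_seq lam1 (map hat_fst D)) \<or>
      lex_prec (label_seq lam1 C1) (label_seq lam1 (map hat_fst D))"
    using C1_least[OF proj(2)] by (cases "map hat_fst D = C1") auto
  have snd_cases: "lex_prec ?SC ?SD \<or> map snd2 D = ?Q"
    using lex_prec_mid_snd[OF K K_least D] .
  have some_less: "lex_prec (label_seq lam1 C1) (label_seq lam1 (map hat_fst D)) \<or> lex_prec ?SC ?SD"
  proof (rule ccontr)
    assume "\<not> ?thesis"
    then have "map hat_fst D = C1" "map snd2 D = ?Q" using C1_least[OF proj(2)] snd_cases by blast+
    then show False using DC hat_zip_fst_snd[of D z2] by simp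
  qed
  have snd_le: "nth_agree ?SC ?SD \<or> lex_prec ?SC ?SD" using snd_cases by auto
  have "length (label_seq lam1 C1) = length ?SC" using lift(3) by simp
  moreover have "length (label_seq lam1 (map hat_fst D)) = length ?SD" by simp
  ultimately have "lex_prec (zip (label_seq lam1 C1) ?SC) (zip (label_seq lam1 (map hat_fst D)) ?SD)"
    using lex_prec_zip fst_le snd_le some_less by blast
  then show ?thesis
    unfolding sat_chain_mid_project(6)[OF lift(1), of lam1 lam2] proj(6)[of lam1 lam2] fst_C lift(2) .
qed

lemma EL_interval_mid: "EL_interval H leH lab u (Mid (y, l))"
proof -
  let ?j = "steps - rises" and ?k = "snd2 u"
  let ?step = "label_seq (step_label lam2)"
  have "EL_interval H1 leH1 lam1 (hat_fst u) (Mid y)"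
    using EL_interval_H1 hat_fst_in[OF u_in] fst_u_below y_in by simp
  then obtain C1 where C1: "sat_chain_between H1 leH1 (hat_fst u) (Mid y) C1" "weakly_increasing lam1 C1"
    and C1_unique: "\<And>D. sat_chain_between H1 leH1 (hat_fst u) (Mid y) D \<Longrightarrow>
      weakly_increasing lam1 D \<Longrightarrow> D = C1"
    and C1_least: "\<And>D. sat_chain_between H1 leH1 (hat_fst u) (Mid y) D \<Longrightarrow> D \<noteq> C1 \<Longrightarrow>
      lex_prec (label_seq lam1 C1) (label_seq lam1 D)"
    by (elim EL_intervalE) blast
  obtain K where K: "sat_chain_between S2 le2 ?k l K" "weakly_increasing lam2 K"
    and K_unique: "\<And>D. sat_chain_between S2 le2 ?k l D \<Longrightarrow> weakly_increasing lam2 D \<Longrightarrow> D = K"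
    and K_least: "\<And>D. sat_chain_between S2 le2 ?k l D \<Longrightarrow> D \<noteq> K \<Longrightarrow>
      lex_prec (label_seq lam2 K) (label_seq lam2 D)"
    using EL_interval_S2[OF snd_u_in l_in snd_u_le] by (elim EL_intervalE) blast
  define Q where "Q = replicate ?j ?k @ K"
  define C where "C = hat_zip C1 Q"
  note lift = sat_chain_mid_lift[OF C1(1) K(1), folded Q_def C_def]
  have fst_C: "map hat_fst C = C1" using lift(3) by (simp add: C_def map_hat_fst_hat_zip)
  have labels: "label_seq lab D = zip (label_seq lam1 (map hat_fst D)) (?step (map snd2 D))"
    if "sat_chain_between H leH u (Mid (y, l)) D" for D
    using sat_chain_mid_project(6)[OF that, of lam1 lam2] .
  have step_Q: "?step Q = replicate ?j None @ map Some (label_seq lam2 K)"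
    using label_seq_step_label_chain[OF K(1)] by (simp add: Q_def)
  have len: "length (label_seq lam1 C1) = length (?step Q)" using lift(3) by simp
  have "sorted_wrt (\<le>) (?step Q)"
    using K(2) step_Q by (simp add: weakly_increasing_iff_sorted sorted_wrt_replicate_None_append)
  then have "weakly_increasing lab C"
    unfolding weakly_increasing_iff_sorted labels[OF lift(1)] fst_C lift(2) sorted_wrt_zip_iff[OF len]
    using C1(2) by (simp add: weakly_increasing_iff_sorted)
  moreover have "D = C"
    if D: "sat_chain_between H leH u (Mid (y, l)) D" and wD: "weakly_increasing lab D" for D
  proof -
    obtain K' where "sat_chain_between S2 le2 ?k l K'" "weakly_increasing lam2 K'"
      and "map snd2 D = replicate ?j ?k @ K'" and "weakly_increasing lam1 (map hat_fst D)"
      using weakly_increasing_mid_decompose[OF D wD] .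
    then have "map snd2 D = Q" and "map hat_fst D = C1"
      using K_unique C1_unique sat_chain_mid_project(2)[OF D] by (auto simp: Q_def)
    then show "D = C" using hat_zip_fst_snd[of D z2] by (simp add: C_def)
  qed
  moreover have "lex_prec (label_seq lab C) (label_seq lab D)"
    if D: "sat_chain_between H leH u (Mid (y, l)) D" and DC: "D \<noteq> C" for D
    using lex_prec_mid[OF C1(1) K(1) C1_least K_least D] DC by (simp add: C_def Q_def)
  ultimately show ?thesis using lift(1) by (intro EL_intervalI)
qed

end

lemma (in rees_EL) EL_labeling_hat_rees: "EL_labeling H leH lab"
  unfolding EL_labeling_iff_EL_interval[OF poset_H]
proof (intro ballI impI)
  fix u v assume u: "u \<in> H" and v: "v \<in> H" and uv: "strict leH u v"
  show "EL_interval H leH lab u v"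
  proof (cases v rule: hat_prod_cases)
    case 1
    then show ?thesis using uv by (simp add: strict_def hat_le_HBot_iff)
  next
    case 2
    then show ?thesis using EL_interval_to_top u uv by (simp add: strict_def)
  next
    case (3 y l)
    interpret rees_EL_interval S1 le1 S2 le2 z2 lam1 lam2 u y l
      using u v uv 3 by unfold_locales simp_all
    show ?thesis using EL_interval_mid 3 by simp
  qed
qed

theorem theorem2p3:
  fixes S1 :: "'a set" and le1 :: "'a \<Rightarrow> 'a \<Rightarrow> bool"
    and S2 :: "'b set" and le2 :: "'b \<Rightarrow> 'b \<Rightarrow> bool"
    and z2 :: 'b
    and lam1 :: "'a hat \<Rightarrow> 'a hat \<Rightarrow> 'l1::order"
    and lam2 :: "'b \<Rightarrow> 'b \<Rightarrow> 'l2::order"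
  assumes "finite_poset S1 le1" and "semipure S1 le1"
    and "finite_poset S2 le2" and "semipure S2 le2"
    and "poset_length S1 le1 = poset_length S2 le2"
    and "is_minimum S2 le2 z2"
    and "EL_labeling (hat_carrier S1) (hat_le le1) lam1"
    and "semi_EL_labeling S2 le2 z2 lam2"
  shows "EL_labeling (hat_carrier (rees_carrier S1 le1 S2 le2))
           (hat_le (rees_le S1 le1 S2 le2)) (rees_label lam1 lam2 z2)"
proof -
  interpret rees_EL S1 le1 S2 le2 z2 lam1 lam2
    using assms(1-4,6-8) by unfold_locales
  show ?thesis by (rule EL_labeling_hat_rees)
qed

end
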